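(* Let $\tau:E\to\mathbb{R}$ be a fibre bundle with $\dim E=n+1$, let $J^1\tau^*$ be the dual of its first jet bundle, and let $R$ be a type $(1,1)$ tensor field on $E$ with $R(dt)=0$. Let $\widetilde{R}$ be the complete lift of $R$ to $J^1\tau^*$ and let $P$ be the canonical Poisson map on $J^1\tau^*$. Then $(P,\widetilde{R})$ is a Poisson–Nijenhuis structure on $J^1\tau^*$ if and only if $N_R=0$, where $N_R$ is the Nijenhuis torsion of $R$.
   Context: Setting: $\tau:E\to\mathbb{R}$ is a fibre bundle, $\dim E=n+1$, with adapted local coordinates $(t,q^i)$, $i=1,\dots,n$ ($t$ the coordinate of $\mathbb{R}$); allowed coordinate changes are $t\mapsto t$, $q^i\mapsto Q^i(t,q)$. The manifold $J^1\tau^*$ is the quotient $T^*E/\langle dt\rangle$: a point over $x\in E$ is a class of covectors at $x$ modulo multiples of $dt_x$; $\pi:J^1\tau^*\to E$ is the projection. Induced coordinates are $(t,q^i,p_i)$, meaning the class is represented by $p_i\,dq^i$; under $Q^i=Q^i(t,q)$ one has $P_j=p_i\,\partial q^i/\partial Q^j$. A $(1,1)$ tensor acts on 1-forms by the adjoint: $\langle R(X),\alpha\rangle=\langle X,R(\alpha)\rangle$. $R(dt)=0$ means that locally $R=R^i_j(t,q)\,\partial_{q^i}\otimes dq^j+R^i_0(t,q)\,\partial_{q^i}\otimes dt$. Complete lift: $\widetilde{R}$ is the $(1,1)$ tensor field on $J^1\tau^*$ given in coordinates by $\widetilde{R}=R^i_j\big(\partial_{q^i}\otimes dq^j+\partial_{p_j}\otimes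 dp_i\big)+R^i_0\,\partial_{q^i}\otimes dt+p_i\big(\tfrac{\partial R^i_j}{\partial q^k}-\tfrac{\partial R^i_k}{\partial q^j}\big)\partial_{p_j}\otimes dq^k+p_i\big(\tfrac{\partial R^i_k}{\partial t}-\tfrac{\partial R^i_0}{\partial q^k}\big)\partial_{p_k}\otimes dt$ (this is well defined). Canonical Poisson structure: the bivector $\Lambda=\partial_{q^i}\wedge\partial_{p_i}$ on $J^1\tau^*$ (the Poisson structure induced from the canonical one on $T^*E$ via the projection $T^*E\to J^1\tau^*$), i.e. $\{F,G\}=\frac{\partial F}{\partial q^i}\frac{\partial G}{\partial p_i}-\frac{\partial F}{\partial p_i}\frac{\partial G}{\partial q^i}$; the Poisson map $P$ from 1-forms to vector fields is defined by $\Lambda(\alpha,\beta)=\langle P(\alpha),\beta\rangle$. Nijenhuis torsion of a $(1,1)$ tensor $S$: $N_S(X,Y)=[SX,SY]+S^2[X,Y]-S[SX,Y]-S[X,SY]$. Poisson–Nijenhuis structure: a pair $(P,N)$ with $P$ a Poisson map and $N$ a $(1,1)$ tensor such that $P\circ N=N\circ P$ (with $N$ acting on 1-forms by its adjoint), $N_N=0$, and the Magri–Morosi concomitant $\mu_{N,P}(\sigma,Z):=(\mathcal{L}_{P(\sigma)}N)(Z)-P\big(\mathcal{L}_Z(N(\sigma))\big)+P\big(\mathcal{L}_{N(Z)}\sigma\big)$ vanishes for all 1-forms $\sigma$ and vector fields $Z$. *)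

theory Defs
  imports "HOL-Analysis.Analysis"
begin

text \<open>Local coordinate calculus on an open set U of a Euclidean space 'x.  Vector fields and
  1-forms are both represented as maps 'x \<Rightarrow> 'x (a 1-form sigma has components
  sigma x \<bullet> b, b \<in> Basis).  A (1,1) tensor field S is represented by its
  action on vectors, S x v.\<close>

type_synonym 'x vfield = "'x \<Rightarrow> 'x"
type_synonym 'x oneform = "'x \<Rightarrow> 'x"
type_synonym 'x tensor11 = "'x \<Rightarrow> 'x \<Rightarrow> 'x"

definition D :: "('a::real_normed_vector \<Rightarrow> 'b::real_normed_vector) \<Rightarrow> 'a \<Rightarrow> 'a \<Rightarrow> 'b" where
  "D F x v = frechet_derivative F (at x) v"

fun Ck :: "nat \<Rightarrow> 'a::real_normed_vector set \<Rightarrow> ('a \<Rightarrow> 'b::real_normed_vector) \<Rightarrow> bool" where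
  "Ck 0 U f = continuous_on U f"
| "Ck (Suc k) U f = ((\<forall>x\<in>U. f differentiable (at x)) \<and> (\<forall>v. Ck k U (\<lambda>x. D f x v)))"

definition smooth_on :: "'a::real_normed_vector set \<Rightarrow> ('a \<Rightarrow> 'b::real_normed_vector) \<Rightarrow> bool" where
  "smooth_on U f = (\<forall>k. Ck k U f)"

definition lie_bracket :: "'x::euclidean_space vfield \<Rightarrow> 'x vfield \<Rightarrow> 'x vfield" where
  "lie_bracket X Y x = D Y x (X x) - D X x (Y x)"

definition tadj :: "'x::euclidean_space tensor11 \<Rightarrow> 'x \<Rightarrow> 'x \<Rightarrow> 'x" where
  "tadj S x \<alpha> = (\<Sum>b\<in>Basis. (\<alpha> \<bullet> S x b) *\<^sub>R b)"

definition tv :: "'x::euclidean_space tensor11 \<Rightarrow> 'x vfield \<Rightarrow> 'x vfield" where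
  "tv S X x = S x (X x)"

definition tf :: "'x::euclidean_space tensor11 \<Rightarrow> 'x oneform \<Rightarrow> 'x oneform" where
  "tf S \<sigma> x = tadj S x (\<sigma> x)"

definition nijenhuis :: "'x::euclidean_space tensor11 \<Rightarrow> 'x vfield \<Rightarrow> 'x vfield \<Rightarrow> 'x vfield" where
  "nijenhuis S X Y =
     (\<lambda>x. lie_bracket (tv S X) (tv S Y) x + tv S (tv S (lie_bracket X Y)) x
          - tv S (lie_bracket (tv S X) Y) x - tv S (lie_bracket X (tv S Y)) x)"

definition lie_form :: "'x::euclidean_space vfield \<Rightarrow> 'x oneform \<Rightarrow> 'x oneform" where
  "lie_form X \<sigma> x = D \<sigma> x (X x) + (\<Sum>b\<in>Basis. (\<sigma> x \<bullet> D X x b) *\<^sub>R b)"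

definition lie_tensor_app :: "'x::euclidean_space vfield \<Rightarrow> 'x tensor11 \<Rightarrow> 'x vfield \<Rightarrow> 'x vfield" where
  "lie_tensor_app X S Z = (\<lambda>x. lie_bracket X (tv S Z) x - tv S (lie_bracket X Z) x)"

text \<open>A Poisson map P: P x alpha is the vector with Lambda(alpha,beta) = P x alpha \<bullet> beta.\<close>
definition pmap :: "('x::euclidean_space \<Rightarrow> 'x \<Rightarrow> 'x) \<Rightarrow> 'x oneform \<Rightarrow> 'x vfield" where
  "pmap P \<sigma> x = P x (\<sigma> x)"

definition grad :: "('x::euclidean_space \<Rightarrow> real) \<Rightarrow> 'x oneform" where
  "grad f x = (\<Sum>b\<in>Basis. D f x b *\<^sub>R b)"

definition pbracket :: "('x::euclidean_space \<Rightarrow> 'x \<Rightarrow> 'x) \<Rightarrow> ('x \<Rightarrow> real) \<Rightarrow> ('x \<Rightarrow> real) \<Rightarrow> 'x \<Rightarrow> real" where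
  "pbracket P f g x = P x (grad f x) \<bullet> grad g x"

definition is_poisson :: "'x::euclidean_space set \<Rightarrow> ('x \<Rightarrow> 'x \<Rightarrow> 'x) \<Rightarrow> bool" where
  "is_poisson U P =
     ((\<forall>x\<in>U. linear (P x) \<and> (\<forall>\<alpha> \<beta>. P x \<alpha> \<bullet> \<beta> = - (P x \<beta> \<bullet> \<alpha>))) \<and>
      (\<forall>f g h. smooth_on U f \<and> smooth_on U g \<and> smooth_on U h \<longrightarrow>
         (\<forall>x\<in>U. pbracket P f (pbracket P g h) x + pbracket P g (pbracket P h f) x
                 + pbracket P h (pbracket P f g) x = 0)))"

definition mm_concomitant :: "('x::euclidean_space \<Rightarrow> 'x \<Rightarrow> 'x) \<Rightarrow> 'x tensor11 \<Rightarrow> 'x oneform \<Rightarrow> 'x vfield \<Rightarrow> 'x vfield" where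
  "mm_concomitant P N \<sigma> Z =
     (\<lambda>x. lie_tensor_app (pmap P \<sigma>) N Z x - pmap P (lie_form Z (tf N \<sigma>)) x
          + pmap P (lie_form (tv N Z) \<sigma>) x)"

definition nijenhuis_zero :: "'x::euclidean_space set \<Rightarrow> 'x tensor11 \<Rightarrow> bool" where
  "nijenhuis_zero U S =
     (\<forall>X Y. smooth_on U X \<and> smooth_on U Y \<longrightarrow> (\<forall>x\<in>U. nijenhuis S X Y x = 0))"

definition poisson_nijenhuis :: "'x::euclidean_space set \<Rightarrow> ('x \<Rightarrow> 'x \<Rightarrow> 'x) \<Rightarrow> 'x tensor11 \<Rightarrow> bool" where
  "poisson_nijenhuis U P N =
     (is_poisson U P \<and>
      (\<forall>x\<in>U. \<forall>\<alpha>. P x (tadj N x \<alpha>) = N x (P x \<alpha>)) \<and>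
      nijenhuis_zero U N \<and>
      (\<forall>\<sigma> Z. smooth_on U \<sigma> \<and> smooth_on U Z \<longrightarrow> (\<forall>x\<in>U. mm_concomitant P N \<sigma> Z x = 0)))"

section \<open>The bundle E (coordinates (t,q)) and J^1 tau^* (coordinates (t,q,p))\<close>

definition dt_E :: "(real \<times> 'q::euclidean_space \<Rightarrow> real) \<Rightarrow> real \<times> 'q \<Rightarrow> real" where
  "dt_E f e = D f e (1, 0)"

definition dq_E :: "'q::euclidean_space \<Rightarrow> (real \<times> 'q \<Rightarrow> real) \<Rightarrow> real \<times> 'q \<Rightarrow> real" where
  "dq_E k f e = D f e (0, k)"

text \<open>The (1,1) tensor R = R^i_j d_{q^i} (x) dq^j + R^i_0 d_{q^i} (x) dt on E
  (the general form of a (1,1) tensor with R(dt) = 0), with components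
  Rc e i j = R^i_j, R0 e i = R^i_0 (i, j in Basis).\<close>
definition tensorE :: "(real \<times> 'q::euclidean_space \<Rightarrow> 'q \<Rightarrow> 'q \<Rightarrow> real) \<Rightarrow> (real \<times> 'q \<Rightarrow> 'q \<Rightarrow> real)
    \<Rightarrow> (real \<times> 'q) tensor11" where
  "tensorE Rc R0 e w =
     (0, (\<Sum>i\<in>Basis. ((\<Sum>j\<in>Basis. Rc e i j * (snd w \<bullet> j)) + R0 e i * fst w) *\<^sub>R i))"

definition J1_over :: "(real \<times> 'q::euclidean_space) set \<Rightarrow> (real \<times> 'q \<times> 'q) set" where
  "J1_over U = {z. (fst z, fst (snd z)) \<in> U}"

text \<open>Canonical Poisson map of Lambda = d_{q^i} /\ d_{p_i}: for alpha = (a0, aq, ap),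
  Lambda(alpha,beta) = aq.bp - ap.bq, so P(alpha) = (0, -ap, aq).\<close>
definition canonical_P :: "real \<times> 'q::euclidean_space \<times> 'q \<Rightarrow> real \<times> 'q \<times> 'q \<Rightarrow> real \<times> 'q \<times> 'q" where
  "canonical_P z \<alpha> = (0, - snd (snd \<alpha>), fst (snd \<alpha>))"

definition complete_lift :: "(real \<times> 'q::euclidean_space \<Rightarrow> 'q \<Rightarrow> 'q \<Rightarrow> real) \<Rightarrow> (real \<times> 'q \<Rightarrow> 'q \<Rightarrow> real)
    \<Rightarrow> (real \<times> 'q \<times> 'q) tensor11" where
  "complete_lift Rc R0 z w =
     (let t = fst z; q = fst (snd z); p = snd (snd z); e = (t, q);
          w0 = fst w; wq = fst (snd w); wp = snd (snd w) in
      (0,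
       (\<Sum>i\<in>Basis. ((\<Sum>j\<in>Basis. Rc e i j * (wq \<bullet> j)) + R0 e i * w0) *\<^sub>R i),
       (\<Sum>j\<in>Basis.
          ((\<Sum>i\<in>Basis. Rc e i j * (wp \<bullet> i))
           + (\<Sum>i\<in>Basis. \<Sum>k\<in>Basis.
                (p \<bullet> i) * (dq_E k (\<lambda>e'. Rc e' i j) e - dq_E j (\<lambda>e'. Rc e' i k) e) * (wq \<bullet> k))
           + (\<Sum>i\<in>Basis.
                (p \<bullet> i) * (dt_E (\<lambda>e'. Rc e' i j) e - dq_E j (\<lambda>e'. R0 e' i) e) * w0)) *\<^sub>R j)))"

end

theory Submission
  imports Defs
begin

(* In the coordinates (t, q, p) the canonical Poisson map P is constant. Hence the Jacobi identity
   reduces to the symmetry of second derivatives, and both the Nijenhuis torsion of a (1,1) tensor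
   field N and the Magri--Morosi concomitant of (P, N) become tensorial: at a point they only
   depend on N and its first derivatives there. For the complete lift of R, the coordinate formula
   makes P commute with the lift and makes the concomitant vanish identically (using the symmetry
   of the second derivatives of R). The torsion of the lift has the torsion of R as its base
   component and a fibre component built from the torsion of R and its derivative, so it vanishes
   exactly when the torsion of R does. *)

section \<open>Derivatives and symmetry of second derivatives\<close>

lemma D_eqI: "(f has_derivative f') (at x) \<Longrightarrow> D f x = f'"
  unfolding D_def using frechet_derivative_at by metis

lemma has_derivative_D: "f differentiable (at x) \<Longrightarrow> (f has_derivative D f x) (at x)"
  unfolding D_def using frechet_derivative_works by blast

lemma linear_D: "f differentiable (at x) \<Longrightarrow> linear (D f x)"
  using has_derivative_D has_derivative_linear by blast

lemma D_cong_open: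
  assumes "open U" "x \<in> U" "\<And>y. y \<in> U \<Longrightarrow> f y = g y"
  shows "D f x = D g x"
proof -
  have "(f has_derivative f') (at x) \<longleftrightarrow> (g has_derivative f') (at x)" for f'
    using has_derivative_transform_within_open[of f f' x UNIV U g]
      has_derivative_transform_within_open[of g f' x UNIV U f] assms by auto
  thus ?thesis unfolding D_def frechet_derivative_def by simp
qed

lemma linear_eq_sum_Basis:
  assumes "linear L"
  shows "L x = (\<Sum>b\<in>Basis. (x \<bullet> b) *\<^sub>R L b)"
proof -
  have "L x = L (\<Sum>b\<in>Basis. (x \<bullet> b) *\<^sub>R b)" by (simp add: euclidean_representation)
  also have "\<dots> = (\<Sum>b\<in>Basis. (x \<bullet> b) *\<^sub>R L b)" using assms by (simp add: linear_sum linear_cmul)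
  finally show ?thesis .
qed

lemma second_difference_mean_value:
  fixes g :: "'a::real_normed_vector \<Rightarrow> real"
  assumes s: "0 < s"
    and dg: "\<And>r. 0 \<le> r \<Longrightarrow> r \<le> s \<Longrightarrow>
      g differentiable (at (x + r *\<^sub>R u)) \<and> g differentiable (at (x + r *\<^sub>R u + s *\<^sub>R v))"
  obtains z where "0 \<le> z" "z \<le> s"
    "g (x + s *\<^sub>R u + s *\<^sub>R v) - g (x + s *\<^sub>R u) - g (x + s *\<^sub>R v) + g x
       = s * (D g (x + z *\<^sub>R u + s *\<^sub>R v) u - D g (x + z *\<^sub>R u) u)"
proof -
  define \<phi> where "\<phi> r = g (x + r *\<^sub>R u + s *\<^sub>R v) - g (x + r *\<^sub>R u)" for r
  define \<phi>' where "\<phi>' r h = D g (x + r *\<^sub>R u + s *\<^sub>R v) (h *\<^sub>R u) - D g (x + r *\<^sub>R u) (h *\<^sub>R u)" for r h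
  have line: "((\<lambda>r. g (x + r *\<^sub>R u + c)) has_derivative (\<lambda>h. D g (x + r *\<^sub>R u + c) (h *\<^sub>R u))) (at r)"
    if "g differentiable (at (x + r *\<^sub>R u + c))" for r c
  proof -
    have "((\<lambda>r. x + r *\<^sub>R u + c) has_derivative (\<lambda>h. h *\<^sub>R u)) (at r)"
      by (auto intro!: derivative_eq_intros)
    from diff_chain_at[OF this has_derivative_D[OF that]] show ?thesis by (simp add: o_def)
  qed
  have "(\<phi> has_derivative \<phi>' r) (at r within {0..s})" if "0 \<le> r" "r \<le> s" for r
  proof -
    have "g differentiable (at (x + r *\<^sub>R u + 0))" "g differentiable (at (x + r *\<^sub>R u + s *\<^sub>R v))"
      using dg[OF that] by simp_all
    from has_derivative_diff[OF line[OF this(2)] line[OF this(1)]]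
    have "(\<phi> has_derivative \<phi>' r) (at r)"
      unfolding \<phi>_def[abs_def] \<phi>'_def by simp
    then show ?thesis by (rule has_derivative_at_withinI)
  qed
  then obtain z where z: "z \<in> {0<..<s}" "\<phi> s - \<phi> 0 = \<phi>' z (s - 0)"
    using mvt_simple[of 0 s \<phi> \<phi>'] s by auto
  have "D g y (s *\<^sub>R u) = s * D g y u" if "g differentiable (at y)" for y
    using linear_cmul[OF linear_D[OF that]] by simp
  then have "\<phi>' z s = s * (D g (x + z *\<^sub>R u + s *\<^sub>R v) u - D g (x + z *\<^sub>R u) u)"
    using dg[of z] z(1) unfolding \<phi>'_def by (simp add: right_diff_distrib)
  moreover have "\<phi> s - \<phi> 0 = g (x + s *\<^sub>R u + s *\<^sub>R v) - g (x + s *\<^sub>R u) - g (x + s *\<^sub>R v) + g x"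
    unfolding \<phi>_def by simp
  ultimately show thesis using z that[of z] by simp
qed

lemma norm_scaleR_add_le:
  assumes "0 \<le> r" "r \<le> s" "0 \<le> t" "t \<le> s"
  shows "norm (r *\<^sub>R u + t *\<^sub>R v) \<le> s * (norm u + norm v)"
proof -
  have "norm (r *\<^sub>R u + t *\<^sub>R v) \<le> r * norm u + t * norm v"
    using norm_triangle_ineq[of "r *\<^sub>R u" "t *\<^sub>R v"] assms by simp
  also have "\<dots> \<le> s * (norm u + norm v)"
    using assms by (simp add: distrib_left add_mono mult_right_mono)
  finally show ?thesis .
qed

lemma has_derivative_difference_bound:
  assumes GL: "(G has_derivative L) (at x)" and e: "e > 0"
  obtains d where "d > 0" "\<And>y1 y2. norm (y1 - x) < d \<Longrightarrow> norm (y2 - x) < d \<Longrightarrow>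
    norm (G y1 - G y2 - L (y1 - y2)) \<le> e * (norm (y1 - x) + norm (y2 - x))"
proof -
  obtain d where d: "d > 0"
    "\<And>y. norm (y - x) < d \<Longrightarrow> norm (G y - G x - L (y - x)) \<le> e * norm (y - x)"
    using GL e unfolding has_derivative_at_alt by blast
  have "norm (G y1 - G y2 - L (y1 - y2)) \<le> e * (norm (y1 - x) + norm (y2 - x))"
    if "norm (y1 - x) < d" "norm (y2 - x) < d" for y1 y2
  proof -
    have "L (y1 - y2) = L (y1 - x) - L (y2 - x)"
      using linear_diff[OF has_derivative_linear[OF GL]] by (metis diff_diff_eq2 diff_add_cancel)
    then have "G y1 - G y2 - L (y1 - y2) = (G y1 - G x - L (y1 - x)) - (G y2 - G x - L (y2 - x))"
      by (simp add: algebra_simps)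
    also have "norm \<dots> \<le> e * norm (y1 - x) + e * norm (y2 - x)"
      using norm_triangle_ineq4 d(2)[OF that(1)] d(2)[OF that(2)] by (smt (verit))
    finally show ?thesis by (simp add: distrib_left)
  qed
  with d(1) show thesis by (rule that)
qed

lemma second_difference_quotient_tendsto:
  fixes g :: "'a::euclidean_space \<Rightarrow> real"
  assumes U: "open U" "x \<in> U" and dg: "\<forall>y\<in>U. g differentiable (at y)"
    and dgu: "(\<lambda>y. D g y u) differentiable (at x)"
  shows "((\<lambda>s. (g (x + s *\<^sub>R u + s *\<^sub>R v) - g (x + s *\<^sub>R u) - g (x + s *\<^sub>R v) + g x) / s\<^sup>2)
           \<longlongrightarrow> D (\<lambda>y. D g y u) x v) (at_right 0)"
proof (rule tendstoI)
  fix e :: real assume e: "e > 0"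
  define G where "G y = D g y u" for y
  define L where "L = D G x"
  have GL: "(G has_derivative L) (at x)"
    using dgu has_derivative_D unfolding G_def[abs_def] L_def by blast
  define K where "K = norm u + norm v + 1"
  have K: "K > 0" "norm u + norm v \<le> K" unfolding K_def
    using norm_ge_zero[of u] norm_ge_zero[of v] by linarith+
  obtain d1 where d1: "d1 > 0" "\<And>y1 y2. norm (y1 - x) < d1 \<Longrightarrow> norm (y2 - x) < d1 \<Longrightarrow>
      norm (G y1 - G y2 - L (y1 - y2)) \<le> e / (4 * K) * (norm (y1 - x) + norm (y2 - x))"
    using has_derivative_difference_bound[OF GL, of "e / (4 * K)"] e K by auto
  obtain d0 where d0: "d0 > 0" "ball x d0 \<subseteq> U" using U open_contains_ball by blast
  show "\<forall>\<^sub>F s in at_right 0. dist ((g (x + s *\<^sub>R u + s *\<^sub>R v) - g (x + s *\<^sub>R u) - g (x + s *\<^sub>R v) + g x) / s\<^sup>2)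
          (D (\<lambda>y. D g y u) x v) < e"
    unfolding eventually_at_right_field
  proof (intro exI[of _ "min d0 d1 / K"] conjI allI impI)
    show "min d0 d1 / K > 0" using d0 d1 K by simp
    fix s :: real assume s: "0 < s" "s < min d0 d1 / K"
    have sK: "s * K < min d0 d1" using s K by (simp add: pos_less_divide_eq)
    have near: "norm (r *\<^sub>R u + t *\<^sub>R v) \<le> s * K" if "0 \<le> r" "r \<le> s" "0 \<le> t" "t \<le> s" for r t
      using norm_scaleR_add_le[OF that, of u v] K s(1) by (smt (verit) mult_left_mono)
    have inU: "x + (r *\<^sub>R u + t *\<^sub>R v) \<in> U" if "0 \<le> r" "r \<le> s" "0 \<le> t" "t \<le> s" for r t
    proof -
      have "norm (r *\<^sub>R u + t *\<^sub>R v) < d0" using near[OF that] sK by simp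
      then have "x + (r *\<^sub>R u + t *\<^sub>R v) \<in> ball x d0"
        by (simp add: dist_norm norm_minus_commute add.commute)
      then show ?thesis using d0(2) by blast
    qed
    then have "g differentiable (at (x + r *\<^sub>R u)) \<and> g differentiable (at (x + r *\<^sub>R u + s *\<^sub>R v))"
      if "0 \<le> r" "r \<le> s" for r
      using inU[of r 0] inU[of r s] that s(1) dg by (simp add: add.assoc)
    then obtain z where z: "0 \<le> z" "z \<le> s"
      and diff: "g (x + s *\<^sub>R u + s *\<^sub>R v) - g (x + s *\<^sub>R u) - g (x + s *\<^sub>R v) + g x
         = s * (G (x + z *\<^sub>R u + s *\<^sub>R v) - G (x + z *\<^sub>R u))"
      using second_difference_mean_value[OF s(1)] unfolding G_def by blast
    define y1 where "y1 = x + z *\<^sub>R u + s *\<^sub>R v"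
    define y2 where "y2 = x + z *\<^sub>R u"
    have n1: "norm (y1 - x) \<le> s * K" using near[OF z, of s] s unfolding y1_def by (simp add: add.assoc)
    have n2: "norm (y2 - x) \<le> s * K" using near[OF z, of 0] s unfolding y2_def by simp
    have "L (y1 - y2) = s * L v"
      using linear_cmul[OF has_derivative_linear[OF GL]] unfolding y1_def y2_def by simp
    then have "\<bar>(G y1 - G y2) - s * L v\<bar> \<le> e / (4 * K) * (norm (y1 - x) + norm (y2 - x))"
      using d1(2)[of y1 y2] n1 n2 sK by simp
    also have "\<dots> \<le> e / (4 * K) * (2 * (s * K))"
      using n1 n2 e K by (intro mult_left_mono) simp_all
    also have "\<dots> = s * (e / 2)" using K by simp
    finally have "\<bar>(G y1 - G y2) / s - L v\<bar> \<le> e / 2"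
      using s(1) by (simp add: abs_le_iff field_simps)
    moreover have "(g (x + s *\<^sub>R u + s *\<^sub>R v) - g (x + s *\<^sub>R u) - g (x + s *\<^sub>R v) + g x) / s\<^sup>2
        = (G y1 - G y2) / s"
      using s(1) unfolding diff y1_def y2_def by (simp add: power2_eq_square)
    ultimately show "dist ((g (x + s *\<^sub>R u + s *\<^sub>R v) - g (x + s *\<^sub>R u) - g (x + s *\<^sub>R v) + g x) / s\<^sup>2)
          (D (\<lambda>y. D g y u) x v) < e"
      using e unfolding L_def G_def[abs_def] dist_real_def by simp
  qed
qed

lemma D_D_commute:
  fixes g :: "'a::euclidean_space \<Rightarrow> real"
  assumes "open U" "x \<in> U" "\<forall>y\<in>U. g differentiable (at y)"
    and "(\<lambda>y. D g y u) differentiable (at x)" "(\<lambda>y. D g y v) differentiable (at x)"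
  shows "D (\<lambda>y. D g y u) x v = D (\<lambda>y. D g y v) x u"
proof (rule tendsto_unique[OF trivial_limit_at_right_real])
  show "((\<lambda>s. (g (x + s *\<^sub>R u + s *\<^sub>R v) - g (x + s *\<^sub>R u) - g (x + s *\<^sub>R v) + g x) / s\<^sup>2)
           \<longlongrightarrow> D (\<lambda>y. D g y u) x v) (at_right 0)"
    using second_difference_quotient_tendsto assms(1-4) .
  have "((\<lambda>s. (g (x + s *\<^sub>R v + s *\<^sub>R u) - g (x + s *\<^sub>R v) - g (x + s *\<^sub>R u) + g x) / s\<^sup>2)
           \<longlongrightarrow> D (\<lambda>y. D g y v) x u) (at_right 0)"
    using second_difference_quotient_tendsto assms(1-3,5) .
  then show "((\<lambda>s. (g (x + s *\<^sub>R u + s *\<^sub>R v) - g (x + s *\<^sub>R u) - g (x + s *\<^sub>R v) + g x) / s\<^sup>2)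
           \<longlongrightarrow> D (\<lambda>y. D g y v) x u) (at_right 0)"
    by (simp add: algebra_simps)
qed

section \<open>Tensorial form of the torsion and of the concomitant\<close>

definition tensor_deriv :: "('a::real_normed_vector \<Rightarrow> 'b \<Rightarrow> 'c::real_normed_vector) \<Rightarrow> 'a \<Rightarrow> 'a \<Rightarrow> 'b \<Rightarrow> 'c" where
  "tensor_deriv S x h w = D (\<lambda>y. S y w) x h"

lemma has_derivative_tensor_apply:
  fixes S :: "'a::euclidean_space \<Rightarrow> 'b::euclidean_space \<Rightarrow> 'c::real_normed_vector"
  assumes U: "open U" "x \<in> U" and lin: "\<forall>y\<in>U. linear (S y)"
    and dS: "\<forall>b\<in>Basis. ((\<lambda>y. S y b) has_derivative S' b) (at x)"
    and dX: "(X has_derivative X') (at x)"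
  shows "((\<lambda>y. S y (X y)) has_derivative (\<lambda>h. S x (X' h) + (\<Sum>b\<in>Basis. (X x \<bullet> b) *\<^sub>R S' b h))) (at x)"
proof -
  have "((\<lambda>y. \<Sum>b\<in>Basis. (X y \<bullet> b) *\<^sub>R S y b) has_derivative
           (\<lambda>h. \<Sum>b\<in>Basis. (X x \<bullet> b) *\<^sub>R S' b h + (X' h \<bullet> b) *\<^sub>R S x b)) (at x)"
    using dS dX by (auto intro!: derivative_eq_intros)
  moreover have "(\<lambda>h. \<Sum>b\<in>Basis. (X x \<bullet> b) *\<^sub>R S' b h + (X' h \<bullet> b) *\<^sub>R S x b)
         = (\<lambda>h. S x (X' h) + (\<Sum>b\<in>Basis. (X x \<bullet> b) *\<^sub>R S' b h))"
    using lin U by (simp add: sum.distrib linear_eq_sum_Basis[symmetric] add.commute)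
  ultimately have "((\<lambda>y. \<Sum>b\<in>Basis. (X y \<bullet> b) *\<^sub>R S y b) has_derivative
      (\<lambda>h. S x (X' h) + (\<Sum>b\<in>Basis. (X x \<bullet> b) *\<^sub>R S' b h))) (at x)" by simp
  then show ?thesis
    by (rule has_derivative_transform_within_open[OF _ U]) (metis lin linear_eq_sum_Basis)
qed

lemma tensor_deriv_eq_sum_Basis:
  fixes S :: "'a::euclidean_space \<Rightarrow> 'b::euclidean_space \<Rightarrow> 'c::real_normed_vector"
  assumes U: "open U" "x \<in> U" and lin: "\<forall>y\<in>U. linear (S y)"
    and dS: "\<forall>b\<in>Basis. (\<lambda>y. S y b) differentiable (at x)"
  shows "tensor_deriv S x h w = (\<Sum>b\<in>Basis. (w \<bullet> b) *\<^sub>R tensor_deriv S x h b)"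
proof -
  have "((\<lambda>y. \<Sum>b\<in>Basis. (w \<bullet> b) *\<^sub>R S y b) has_derivative
          (\<lambda>h. \<Sum>b\<in>Basis. (w \<bullet> b) *\<^sub>R tensor_deriv S x h b)) (at x)"
    unfolding tensor_deriv_def using dS has_derivative_D by (auto intro!: derivative_eq_intros)
  then have "((\<lambda>y. S y w) has_derivative (\<lambda>h. \<Sum>b\<in>Basis. (w \<bullet> b) *\<^sub>R tensor_deriv S x h b)) (at x)"
    by (rule has_derivative_transform_within_open[OF _ U]) (metis lin linear_eq_sum_Basis)
  then show ?thesis unfolding tensor_deriv_def[of S x h w] by (simp add: D_eqI)
qed

lemma has_derivative_tv:
  fixes S :: "'a::euclidean_space \<Rightarrow> 'a \<Rightarrow> 'a"
  assumes U: "open U" "x \<in> U" and lin: "\<forall>y\<in>U. linear (S y)"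
    and dS: "\<forall>b\<in>Basis. (\<lambda>y. S y b) differentiable (at x)"
    and dX: "X differentiable (at x)"
  shows "(tv S X has_derivative (\<lambda>h. S x (D X x h) + tensor_deriv S x h (X x))) (at x)"
proof -
  have "\<forall>b\<in>Basis. ((\<lambda>y. S y b) has_derivative (\<lambda>h. tensor_deriv S x h b)) (at x)"
    unfolding tensor_deriv_def using dS by (auto intro: has_derivative_D)
  from has_derivative_tensor_apply[OF U lin this has_derivative_D[OF dX]]
  show ?thesis unfolding tv_def by (simp only: tensor_deriv_eq_sum_Basis[OF U lin dS, symmetric])
qed

definition nijenhuis_at :: "('a::euclidean_space \<Rightarrow> 'a \<Rightarrow> 'a) \<Rightarrow> 'a \<Rightarrow> 'a \<Rightarrow> 'a \<Rightarrow> 'a" where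
  "nijenhuis_at S x u v = tensor_deriv S x (S x u) v - tensor_deriv S x (S x v) u
     + S x (tensor_deriv S x v u) - S x (tensor_deriv S x u v)"

lemma nijenhuis_eq_nijenhuis_at:
  fixes S :: "'a::euclidean_space \<Rightarrow> 'a \<Rightarrow> 'a"
  assumes U: "open U" "x \<in> U" and lin: "\<forall>y\<in>U. linear (S y)"
    and dS: "\<forall>b\<in>Basis. (\<lambda>y. S y b) differentiable (at x)"
    and dX: "X differentiable (at x)" and dY: "Y differentiable (at x)"
  shows "nijenhuis S X Y x = nijenhuis_at S x (X x) (Y x)"
proof -
  have l: "linear (S x)" using lin U by auto
  have DX: "D (tv S X) x = (\<lambda>h. S x (D X x h) + tensor_deriv S x h (X x))"
    using D_eqI has_derivative_tv[OF U lin dS dX] by blast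
  have DY: "D (tv S Y) x = (\<lambda>h. S x (D Y x h) + tensor_deriv S x h (Y x))"
    using D_eqI has_derivative_tv[OF U lin dS dY] by blast
  have "nijenhuis S X Y x = D (tv S Y) x (S x (X x)) - D (tv S X) x (S x (Y x))
     + S x (S x (D Y x (X x) - D X x (Y x))) - S x (D Y x (S x (X x)) - D (tv S X) x (Y x))
     - S x (D (tv S Y) x (X x) - D X x (S x (Y x)))"
    by (simp add: nijenhuis_def lie_bracket_def tv_def)
  also have "\<dots> = S x (D Y x (S x (X x))) + tensor_deriv S x (S x (X x)) (Y x)
       - (S x (D X x (S x (Y x))) + tensor_deriv S x (S x (Y x)) (X x))
     + (S x (S x (D Y x (X x))) - S x (S x (D X x (Y x))))
     - (S x (D Y x (S x (X x))) - (S x (S x (D X x (Y x))) + S x (tensor_deriv S x (Y x) (X x))))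
     - (S x (S x (D Y x (X x))) + S x (tensor_deriv S x (X x) (Y x)) - S x (D X x (S x (Y x))))"
    unfolding DX DY by (simp only: linear_add[OF l] linear_diff[OF l])
  also have "\<dots> = nijenhuis_at S x (X x) (Y x)" unfolding nijenhuis_at_def by (simp add: algebra_simps)
  finally show ?thesis .
qed

lemma adjoint_sum_Basis_inner:
  assumes "linear L"
  shows "(\<Sum>b\<in>Basis. (s \<bullet> L b) *\<^sub>R b) \<bullet> v = s \<bullet> L v"
proof -
  have "(\<Sum>b\<in>Basis. (s \<bullet> L b) *\<^sub>R b) \<bullet> v = s \<bullet> (\<Sum>b\<in>Basis. (v \<bullet> b) *\<^sub>R L b)"
    by (simp add: inner_sum_left inner_sum_right inner_commute mult.commute)
  also have "\<dots> = s \<bullet> L v" using linear_eq_sum_Basis[OF assms, of v] by simp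
  finally show ?thesis .
qed

definition concomitant_at :: "('a::euclidean_space \<Rightarrow> 'a \<Rightarrow> 'a) \<Rightarrow> ('a \<Rightarrow> 'a) \<Rightarrow> 'a \<Rightarrow> 'a \<Rightarrow> 'a \<Rightarrow> 'a" where
  "concomitant_at N P x s w = tensor_deriv N x (P s) w - P (\<Sum>b\<in>Basis. (s \<bullet> tensor_deriv N x w b) *\<^sub>R b)
      + P (\<Sum>b\<in>Basis. (s \<bullet> tensor_deriv N x b w) *\<^sub>R b)"

lemma mm_concomitant_const_eq_concomitant_at:
  fixes N :: "'a::euclidean_space \<Rightarrow> 'a \<Rightarrow> 'a" and P :: "'a \<Rightarrow> 'a"
  assumes U: "open U" "x \<in> U" and lin: "\<forall>y\<in>U. linear (N y)"
    and dN: "\<forall>b\<in>Basis. (\<lambda>y. N y b) differentiable (at x)"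
    and linP: "linear P" and comm: "\<forall>\<alpha>. P (tadj N x \<alpha>) = N x (P \<alpha>)"
    and d\<sigma>: "\<sigma> differentiable (at x)" and dZ: "Z differentiable (at x)"
  shows "mm_concomitant (\<lambda>y. P) N \<sigma> Z x = concomitant_at N P x (\<sigma> x) (Z x)"
proof -
  have l: "linear (N x)" using lin U by auto
  have dNb: "((\<lambda>y. N y b) has_derivative (\<lambda>h. tensor_deriv N x h b)) (at x)" if "b \<in> Basis" for b
    unfolding tensor_deriv_def using dN that by (auto intro: has_derivative_D)
  have D\<sigma>: "(\<sigma> has_derivative D \<sigma> x) (at x)" using d\<sigma> has_derivative_D by blast
  have DP: "D (pmap (\<lambda>y. P) \<sigma>) x = (\<lambda>h. P (D \<sigma> x h))"
    unfolding pmap_def using linP linear_conv_bounded_linear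
    by (intro D_eqI bounded_linear.has_derivative[OF _ D\<sigma>]) blast
  have DNZ: "D (tv N Z) x = (\<lambda>h. N x (D Z x h) + tensor_deriv N x h (Z x))"
    using D_eqI has_derivative_tv[OF U lin dN dZ] by blast
  have "tf N \<sigma> = (\<lambda>y. \<Sum>b\<in>Basis. (\<sigma> y \<bullet> N y b) *\<^sub>R b)"
    by (simp add: tf_def tadj_def fun_eq_iff)
  then have Dtf: "D (tf N \<sigma>) x = (\<lambda>h. \<Sum>b\<in>Basis. (D \<sigma> x h \<bullet> N x b + \<sigma> x \<bullet> tensor_deriv N x h b) *\<^sub>R b)"
    by (intro D_eqI) (auto intro!: derivative_eq_intros dNb D\<sigma> simp: algebra_simps)
  define A1 where "A1 = (\<Sum>b\<in>Basis. (D \<sigma> x (Z x) \<bullet> N x b) *\<^sub>R b)"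
  define A2 where "A2 = (\<Sum>b\<in>Basis. (\<sigma> x \<bullet> tensor_deriv N x (Z x) b) *\<^sub>R b)"
  define A3 where "A3 = (\<Sum>b\<in>Basis. (\<sigma> x \<bullet> N x (D Z x b)) *\<^sub>R b)"
  define A4 where "A4 = (\<Sum>b\<in>Basis. (\<sigma> x \<bullet> tensor_deriv N x b (Z x)) *\<^sub>R b)"
  have "(\<Sum>b\<in>Basis. (tf N \<sigma> x \<bullet> D Z x b) *\<^sub>R b) = A3"
    unfolding A3_def tf_def tadj_def using adjoint_sum_Basis_inner[OF l] by simp
  then have LF1: "lie_form Z (tf N \<sigma>) x = A1 + A2 + A3"
    unfolding lie_form_def Dtf A1_def A2_def by (simp add: scaleR_add_left sum.distrib)
  have LF2: "lie_form (tv N Z) \<sigma> x = D \<sigma> x (N x (Z x)) + A3 + A4"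
    unfolding lie_form_def DNZ A3_def A4_def
    by (simp add: tv_def inner_add_right scaleR_add_left sum.distrib add.assoc)
  have A1: "P A1 = N x (P (D \<sigma> x (Z x)))"
    using comm unfolding A1_def tadj_def by metis
  have "mm_concomitant (\<lambda>y. P) N \<sigma> Z x =
      (N x (D Z x (P (\<sigma> x))) + tensor_deriv N x (P (\<sigma> x)) (Z x)) - P (D \<sigma> x (N x (Z x)))
      - N x (D Z x (P (\<sigma> x)) - P (D \<sigma> x (Z x)))
      - P (A1 + A2 + A3) + P (D \<sigma> x (N x (Z x)) + A3 + A4)"
    unfolding mm_concomitant_def lie_tensor_app_def LF1 LF2
    by (simp add: lie_bracket_def DP DNZ pmap_def tv_def LF1 LF2)
  also have "\<dots> = tensor_deriv N x (P (\<sigma> x)) (Z x) - P A2 + P A4"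
    by (simp add: linear_add[OF linP] linear_diff[OF linP] linear_diff[OF l] A1 algebra_simps)
  finally show ?thesis unfolding concomitant_at_def A2_def A4_def .
qed

section \<open>Constant Poisson structures\<close>

definition twice_differentiable_on :: "'a::real_normed_vector set \<Rightarrow> ('a \<Rightarrow> 'b::real_normed_vector) \<Rightarrow> bool" where
  "twice_differentiable_on U f \<longleftrightarrow>
     (\<forall>y\<in>U. f differentiable (at y)) \<and> (\<forall>v. \<forall>y\<in>U. (\<lambda>y. D f y v) differentiable (at y))"

lemma twice_differentiable_onD:
  assumes "twice_differentiable_on U f" "y \<in> U"
  shows "f differentiable (at y)" "(\<lambda>y. D f y v) differentiable (at y)"
  using assms unfolding twice_differentiable_on_def by blast+

lemma smooth_on_imp_twice_differentiable_on: "smooth_on U f \<Longrightarrow> twice_differentiable_on U f"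
  unfolding smooth_on_def twice_differentiable_on_def by (drule spec[of _ 2]) (simp add: numeral_2_eq_2)

lemma smooth_on_imp_differentiable: "smooth_on U f \<Longrightarrow> y \<in> U \<Longrightarrow> f differentiable (at y)"
  using smooth_on_imp_twice_differentiable_on twice_differentiable_onD by blast

lemma smooth_on_const: "smooth_on (U :: 'a::real_normed_vector set) (\<lambda>x. c)"
proof -
  have "Ck k U (\<lambda>x. c)" for k
  proof (induction k arbitrary: c)
    case (Suc k)
    have "D (\<lambda>x. c) x = (\<lambda>h. 0)" for x :: 'a by (rule D_eqI) (rule has_derivative_const)
    then have "Ck k U (\<lambda>x. D (\<lambda>x. c) x v)" for v using Suc.IH[of 0] by simp
    then show ?case by simp
  qed simp
  then show ?thesis unfolding smooth_on_def by blast
qed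

definition hessian :: "('a::real_normed_vector \<Rightarrow> real) \<Rightarrow> 'a \<Rightarrow> 'a \<Rightarrow> 'a \<Rightarrow> real" where
  "hessian g x u w = D (\<lambda>y. D g y w) x u"

lemma hessian_commute:
  fixes g :: "'a::euclidean_space \<Rightarrow> real"
  assumes "open U" "x \<in> U" "twice_differentiable_on U g"
  shows "hessian g x u w = hessian g x w u"
  unfolding hessian_def
  using assms by (intro D_D_commute[of U]) (auto simp: twice_differentiable_on_def)

lemma has_derivative_D_hessian:
  fixes g :: "'a::euclidean_space \<Rightarrow> real"
  assumes U: "open U" "x \<in> U" and g: "twice_differentiable_on U g"
  shows "((\<lambda>y. D g y w) has_derivative (\<lambda>u. \<Sum>b\<in>Basis. (w \<bullet> b) * hessian g x u b)) (at x)"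
proof -
  have "((\<lambda>y. \<Sum>b\<in>Basis. (w \<bullet> b) * D g y b) has_derivative (\<lambda>u. \<Sum>b\<in>Basis. (w \<bullet> b) * hessian g x u b)) (at x)"
    unfolding hessian_def using g U unfolding twice_differentiable_on_def
    by (auto intro!: derivative_eq_intros has_derivative_D)
  then show ?thesis
  proof (rule has_derivative_transform_within_open[OF _ U])
    fix y assume "y \<in> U"
    then have "linear (D g y)" using g unfolding twice_differentiable_on_def by (auto intro: linear_D)
    then show "(\<Sum>b\<in>Basis. (w \<bullet> b) * D g y b) = D g y w" using linear_eq_sum_Basis[of "D g y" w] by simp
  qed
qed

lemma hessian_eq_sum_Basis:
  fixes g :: "'a::euclidean_space \<Rightarrow> real"
  assumes "open U" "x \<in> U" "twice_differentiable_on U g"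
  shows "hessian g x u w = (\<Sum>b\<in>Basis. (w \<bullet> b) * hessian g x u b)"
  using D_eqI[OF has_derivative_D_hessian[OF assms, of w]] unfolding hessian_def[of g x u w] by simp

lemma linear_hessian_left:
  assumes "twice_differentiable_on U g" "x \<in> U"
  shows "linear (\<lambda>u. hessian g x u w)"
  using assms unfolding twice_differentiable_on_def hessian_def by (simp add: linear_D)

lemma linear_hessian:
  fixes g :: "'a::euclidean_space \<Rightarrow> real"
  assumes "open U" "x \<in> U" "twice_differentiable_on U g"
  shows "linear (hessian g x u)"
proof -
  have eq: "hessian g x u = (\<lambda>w. \<Sum>b\<in>Basis. (w \<bullet> b) * hessian g x u b)"
    by (intro ext hessian_eq_sum_Basis[OF assms])
  have "linear (\<lambda>w. \<Sum>b\<in>Basis. (w \<bullet> b) * hessian g x u b)"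
    by (rule linearI) (simp_all add: inner_add_left distrib_right sum.distrib sum_distrib_left algebra_simps)
  then show ?thesis by (subst eq)
qed

lemma hessian_sum_Basis_inner:
  fixes g :: "'a::euclidean_space \<Rightarrow> real"
  assumes "open U" "x \<in> U" "twice_differentiable_on U g"
  shows "(\<Sum>b\<in>Basis. hessian g x v b *\<^sub>R b) \<bullet> w = hessian g x v w"
  using hessian_eq_sum_Basis[OF assms, of v w]
  by (simp add: inner_sum_left inner_sum_right inner_commute mult.commute)

lemma grad_inner:
  assumes "g differentiable (at y)"
  shows "grad g y \<bullet> v = D g y v"
  using linear_eq_sum_Basis[OF linear_D[OF assms], of v]
  unfolding grad_def by (simp add: inner_sum_left inner_sum_right inner_commute mult.commute)

lemma has_derivative_grad:
  fixes g :: "'a::euclidean_space \<Rightarrow> real"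
  assumes U: "open U" "x \<in> U" and g: "twice_differentiable_on U g"
  shows "(grad g has_derivative (\<lambda>v. \<Sum>b\<in>Basis. hessian g x v b *\<^sub>R b)) (at x)"
proof -
  have "grad g = (\<lambda>y. \<Sum>b\<in>Basis. D g y b *\<^sub>R b)" by (simp add: grad_def fun_eq_iff)
  moreover have "((\<lambda>y. \<Sum>b\<in>Basis. D g y b *\<^sub>R b) has_derivative (\<lambda>v. \<Sum>b\<in>Basis. hessian g x v b *\<^sub>R b)) (at x)"
    unfolding hessian_def using g U unfolding twice_differentiable_on_def
    by (auto intro!: derivative_eq_intros has_derivative_D)
  ultimately show ?thesis by simp
qed

lemma has_derivative_pbracket_const:
  fixes g h :: "'a::euclidean_space \<Rightarrow> real"
  assumes U: "open U" "x \<in> U" and g: "twice_differentiable_on U g" and h: "twice_differentiable_on U h"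
    and P: "linear P"
  shows "(pbracket (\<lambda>y. P) g h has_derivative
      (\<lambda>v. P (\<Sum>b\<in>Basis. hessian g x v b *\<^sub>R b) \<bullet> grad h x + P (grad g x) \<bullet> (\<Sum>b\<in>Basis. hessian h x v b *\<^sub>R b)))
      (at x)"
proof -
  have bP: "bounded_linear P" using P linear_conv_bounded_linear by blast
  have e: "pbracket (\<lambda>y. P) g h = (\<lambda>y. P (grad g y) \<bullet> grad h y)" by (simp add: pbracket_def fun_eq_iff)
  show ?thesis unfolding e
    by (rule has_derivative_eq_rhs, rule has_derivative_inner,
        rule bounded_linear.has_derivative[OF bP has_derivative_grad[OF U g]],
        rule has_derivative_grad[OF U h]) (auto simp: inner_commute add.commute)
qed

text \<open>The second derivatives cancel in the Jacobi identity by symmetry of the Hessians.\<close>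
lemma pbracket_pbracket_const:
  fixes f g h :: "'a::euclidean_space \<Rightarrow> real"
  assumes U: "open U" "x \<in> U" and g: "twice_differentiable_on U g" and h: "twice_differentiable_on U h"
    and P: "linear P" and skew: "\<forall>a b. P a \<bullet> b = - (a \<bullet> P b)"
  shows "pbracket (\<lambda>y. P) f (pbracket (\<lambda>y. P) g h) x =
     - hessian g x (P (grad f x)) (P (grad h x)) + hessian h x (P (grad f x)) (P (grad g x))"
proof -
  note gh = has_derivative_pbracket_const[OF U g h P]
  then have dgh: "pbracket (\<lambda>y. P) g h differentiable (at x)" unfolding differentiable_def by blast
  have "pbracket (\<lambda>y. P) f (pbracket (\<lambda>y. P) g h) x = D (pbracket (\<lambda>y. P) g h) x (P (grad f x))"
    unfolding pbracket_def[of _ f] using grad_inner[OF dgh] by (simp add: inner_commute)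
  also have "\<dots> = P (\<Sum>b\<in>Basis. hessian g x (P (grad f x)) b *\<^sub>R b) \<bullet> grad h x
      + P (grad g x) \<bullet> (\<Sum>b\<in>Basis. hessian h x (P (grad f x)) b *\<^sub>R b)"
    using D_eqI[OF gh] by simp
  also have "\<dots> = - hessian g x (P (grad f x)) (P (grad h x)) + hessian h x (P (grad f x)) (P (grad g x))"
    by (simp only: skew[rule_format, of "\<Sum>b\<in>Basis. hessian g x (P (grad f x)) b *\<^sub>R b"]
        inner_commute[of "P (grad g x)"] hessian_sum_Basis_inner[OF U g] hessian_sum_Basis_inner[OF U h])
  finally show ?thesis .
qed

lemma is_poisson_const:
  fixes P :: "'a::euclidean_space \<Rightarrow> 'a"
  assumes U: "open U" and P: "linear P" and skew: "\<forall>a b. P a \<bullet> b = - (a \<bullet> P b)"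
  shows "is_poisson U (\<lambda>y. P)"
  unfolding is_poisson_def
proof (intro conjI ballI allI impI)
  show "linear P" by (rule P)
  show "P \<alpha> \<bullet> \<beta> = - (P \<beta> \<bullet> \<alpha>)" for \<alpha> \<beta>
    using skew[rule_format, of \<alpha> \<beta>] by (simp only: inner_commute[of \<alpha>])
next
  fix f g h :: "'a \<Rightarrow> real" and x
  assume "smooth_on U f \<and> smooth_on U g \<and> smooth_on U h" and x: "x \<in> U"
  then have f: "twice_differentiable_on U f" and g: "twice_differentiable_on U g"
    and h: "twice_differentiable_on U h"
    by (auto intro: smooth_on_imp_twice_differentiable_on)
  show "pbracket (\<lambda>y. P) f (pbracket (\<lambda>y. P) g h) x + pbracket (\<lambda>y. P) g (pbracket (\<lambda>y. P) h f) x
        + pbracket (\<lambda>y. P) h (pbracket (\<lambda>y. P) f g) x = 0"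
    unfolding pbracket_pbracket_const[OF U x g h P skew] pbracket_pbracket_const[OF U x h f P skew]
      pbracket_pbracket_const[OF U x f g P skew]
    using hessian_commute[OF U x f] hessian_commute[OF U x g] hessian_commute[OF U x h] by simp
qed

section \<open>The complete lift at a point\<close>

definition vert :: "'q::euclidean_space \<Rightarrow> real \<times> 'q" where "vert k = (0, k)"
definition base :: "real \<times> 'q::euclidean_space \<times> 'q \<Rightarrow> real \<times> 'q" where "base \<xi> = (fst \<xi>, fst (snd \<xi>))"
definition fib :: "real \<times> 'q::euclidean_space \<times> 'q \<Rightarrow> 'q" where "fib \<xi> = snd (snd \<xi>)"

lemma vert_add[simp]: "vert (a + b) = vert a + vert b" and vert_diff[simp]: "vert (a - b) = vert a - vert b"
  and vert_minus[simp]: "vert (- a) = - vert a" and vert_scale[simp]: "vert (c *\<^sub>R a) = c *\<^sub>R vert a"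
  and vert_zero[simp]: "vert 0 = 0"
  by (simp_all add: vert_def zero_prod_def)

lemma base_add[simp]: "base (a + b) = base a + base b" and base_diff[simp]: "base (a - b) = base a - base b"
  and base_minus[simp]: "base (- a) = - base a" and base_scale[simp]: "base (c *\<^sub>R a) = c *\<^sub>R base a"
  and base_zero[simp]: "base 0 = 0" and base_Pair0[simp]: "base (0, y, z) = vert y"
  by (simp_all add: base_def vert_def zero_prod_def)

lemma base_Pair: "base (x, y, z) = (x, y)" by (simp add: base_def)

lemma mem_J1_over [simp]: "z \<in> J1_over U \<longleftrightarrow> base z \<in> U"
  by (simp add: J1_over_def base_def)

lemma fib_add[simp]: "fib (a + b) = fib a + fib b" and fib_diff[simp]: "fib (a - b) = fib a - fib b"
  and fib_minus[simp]: "fib (- a) = - fib a" and fib_scale[simp]: "fib (c *\<^sub>R a) = c *\<^sub>R fib a"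
  and fib_zero[simp]: "fib 0 = 0" and fib_Pair[simp]: "fib (x, y, z) = z"
  by (simp_all add: fib_def)

lemma J_eqI:
  fixes x y :: "real \<times> 'q::euclidean_space \<times> 'q"
  assumes "fst x = fst y" "fst (snd x) = fst (snd y)" "\<And>k. k \<in> Basis \<Longrightarrow> fib x \<bullet> k = fib y \<bullet> k"
  shows "x = y"
proof -
  have "fib x = fib y" using assms(3) by (rule euclidean_eqI)
  then show ?thesis using assms(1,2) unfolding fib_def by (simp add: prod_eq_iff)
qed

lemma sum_Basis_scaleR_inner:
  fixes g :: "'q::euclidean_space \<Rightarrow> real"
  assumes "\<And>a b. g (a + b) = g a + g b" "\<And>c a. g (c *\<^sub>R a) = c * g a"
  shows "(\<Sum>k\<in>Basis. g k *\<^sub>R k) \<bullet> a = g a"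
proof -
  have "linear g" by (rule linearI) (use assms in auto)
  then have "g a = (\<Sum>k\<in>Basis. (a \<bullet> k) *\<^sub>R g k)" by (rule linear_eq_sum_Basis)
  then show ?thesis by (simp add: inner_sum_left inner_sum_right inner_commute mult.commute)
qed

lemma qpart_inner: "fst (snd y) \<bullet> k = y \<bullet> ((0::real), k, (0::'q::euclidean_space))"
  by (cases y) simp
lemma fib_inner: "fib y \<bullet> k = y \<bullet> ((0::real), (0::'q::euclidean_space), k)"
  by (cases y) (simp add: fib_def)
lemma inner_split: "(x::real \<times> 'q::euclidean_space \<times> 'q) \<bullet> y = fst x * fst y + fst (snd x) \<bullet> fst (snd y) + fib x \<bullet> fib y"
  by (cases x; cases y) (simp add: fib_def)

lemma canonical_P_fst[simp]: "fst (canonical_P z \<alpha>) = 0" and canonical_P_qpart[simp]: "fst (snd (canonical_P z \<alpha>)) = - fib \<alpha>"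
  and canonical_P_fib[simp]: "fib (canonical_P z \<alpha>) = fst (snd \<alpha>)" and canonical_P_base[simp]: "base (canonical_P z \<alpha>) = vert (- fib \<alpha>)"
  by (simp_all add: canonical_P_def fib_def base_def vert_def)

lemma canonical_P_const: "canonical_P = (\<lambda>_. canonical_P 0)"
  by (simp add: fun_eq_iff canonical_P_def)

lemma linear_canonical_P: "linear (canonical_P z)"
  by (rule linearI) (simp_all add: canonical_P_def)

lemma canonical_P_skew: "canonical_P z a \<bullet> b = - (a \<bullet> canonical_P z b)"
  by (cases a; cases b) (simp add: canonical_P_def inner_commute)

lemma is_poisson_canonical_P: "open U \<Longrightarrow> is_poisson U canonical_P"
  by (subst canonical_P_const) (rule is_poisson_const, simp_all add: linear_canonical_P canonical_P_skew)

lemma vert_eq_0_iff: "vert x = 0 \<longleftrightarrow> x = 0"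
  by (simp add: vert_def zero_prod_def)

text \<open>The torsion, at a point, of the tensor field on \<open>E\<close> whose \<open>q\<close>-part has value \<open>R\<close> and
  derivative \<open>dR\<close> there (cf. \<open>nijenhuis_at\<close>); \<open>dnijenhuis_coords\<close> is its derivative.\<close>
definition nijenhuis_coords ::
    "(real \<times> 'q::euclidean_space \<Rightarrow> 'q) \<Rightarrow> (real \<times> 'q \<Rightarrow> real \<times> 'q \<Rightarrow> 'q) \<Rightarrow> real \<times> 'q \<Rightarrow> real \<times> 'q \<Rightarrow> 'q" where
  "nijenhuis_coords R dR B C = dR (vert (R B)) C - dR (vert (R C)) B + R (vert (dR C B)) - R (vert (dR B C))"

definition dnijenhuis_coords ::
    "(real \<times> 'q::euclidean_space \<Rightarrow> 'q) \<Rightarrow> (real \<times> 'q \<Rightarrow> real \<times> 'q \<Rightarrow> 'q)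
      \<Rightarrow> (real \<times> 'q \<Rightarrow> real \<times> 'q \<Rightarrow> real \<times> 'q \<Rightarrow> 'q) \<Rightarrow> real \<times> 'q \<Rightarrow> real \<times> 'q \<Rightarrow> real \<times> 'q \<Rightarrow> 'q" where
  "dnijenhuis_coords R dR ddR A B C = ddR A (vert (R B)) C + dR (vert (dR A B)) C - ddR A (vert (R C)) B - dR (vert (dR A C)) B
     + dR A (vert (dR C B)) + R (vert (ddR A C B)) - dR A (vert (dR B C)) - R (vert (ddR A B C))"

text \<open>The complete lift at one point of \<open>J\<^sup>1\<tau>\<^sup>*\<close>: \<open>R\<close>, \<open>dR h\<close> and \<open>ddR h h'\<close> are the values at the
  base point of the \<open>q\<close>-part of the tensor field and of its first and second derivatives,
  and \<open>p\<close> is the fibre coordinate.\<close>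
locale lift_at =
  fixes R :: "real \<times> 'q::euclidean_space \<Rightarrow> 'q"
    and dR :: "real \<times> 'q \<Rightarrow> real \<times> 'q \<Rightarrow> 'q"
    and ddR :: "real \<times> 'q \<Rightarrow> real \<times> 'q \<Rightarrow> real \<times> 'q \<Rightarrow> 'q"
    and p :: 'q
  assumes linear_R: "linear R"
    and linear_dR_left: "linear (\<lambda>h. dR h w)" and linear_dR: "linear (dR h)"
    and linear_ddR_left: "linear (\<lambda>h. ddR h v w)" and linear_ddR_mid: "linear (\<lambda>v. ddR h v w)"
    and linear_ddR: "linear (ddR h v)"
    and ddR_commute: "ddR h v w = ddR v h w"
begin

lemmas lin_simps =
  linear_add[OF linear_R] linear_cmul[OF linear_R] linear_diff[OF linear_R] linear_neg[OF linear_R] linear_0[OF linear_R]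
  linear_add[OF linear_dR_left] linear_cmul[OF linear_dR_left] linear_diff[OF linear_dR_left]
  linear_neg[OF linear_dR_left] linear_0[OF linear_dR_left]
  linear_add[OF linear_dR] linear_cmul[OF linear_dR] linear_diff[OF linear_dR] linear_neg[OF linear_dR] linear_0[OF linear_dR]
  linear_add[OF linear_ddR_left] linear_cmul[OF linear_ddR_left] linear_diff[OF linear_ddR_left]
  linear_neg[OF linear_ddR_left] linear_0[OF linear_ddR_left]
  linear_add[OF linear_ddR_mid] linear_cmul[OF linear_ddR_mid] linear_diff[OF linear_ddR_mid]
  linear_neg[OF linear_ddR_mid] linear_0[OF linear_ddR_mid]
  linear_add[OF linear_ddR] linear_cmul[OF linear_ddR] linear_diff[OF linear_ddR] linear_neg[OF linear_ddR] linear_0[OF linear_ddR]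

definition lift :: "real \<times> 'q \<times> 'q \<Rightarrow> real \<times> 'q \<times> 'q" where
  "lift \<xi> = (0, R (base \<xi>), \<Sum>k\<in>Basis. (fib \<xi> \<bullet> R (vert k) + p \<bullet> dR (base \<xi>) (vert k) - p \<bullet> dR (vert k) (base \<xi>)) *\<^sub>R k)"

definition dlift :: "real \<times> 'q \<times> 'q \<Rightarrow> real \<times> 'q \<times> 'q \<Rightarrow> real \<times> 'q \<times> 'q" where
  "dlift \<eta> \<xi> = (0, dR (base \<eta>) (base \<xi>), \<Sum>k\<in>Basis. (fib \<xi> \<bullet> dR (base \<eta>) (vert k) + fib \<eta> \<bullet> dR (base \<xi>) (vert k)
      - fib \<eta> \<bullet> dR (vert k) (base \<xi>) + p \<bullet> ddR (base \<eta>) (base \<xi>) (vert k) - p \<bullet> ddR (base \<eta>) (vert k) (base \<xi>)) *\<^sub>R k)"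

lemma fst_lift[simp]: "fst (lift \<xi>) = 0" by (simp add: lift_def)
lemma qpart_lift[simp]: "fst (snd (lift \<xi>)) = R (base \<xi>)" by (simp add: lift_def)
lemma base_lift[simp]: "base (lift \<xi>) = vert (R (base \<xi>))" by (simp add: lift_def)
lemma fib_lift[simp]: "fib (lift \<xi>) \<bullet> a = fib \<xi> \<bullet> R (vert a) + p \<bullet> dR (base \<xi>) (vert a) - p \<bullet> dR (vert a) (base \<xi>)"
  unfolding lift_def fib_Pair
  by (rule sum_Basis_scaleR_inner) (simp_all add: lin_simps inner_add_right inner_diff_right algebra_simps)
lemma inner_fib_lift[simp]: "a \<bullet> fib (lift \<xi>) = fib \<xi> \<bullet> R (vert a) + p \<bullet> dR (base \<xi>) (vert a) - p \<bullet> dR (vert a) (base \<xi>)"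
  using fib_lift by (simp add: inner_commute)

lemma fst_dlift[simp]: "fst (dlift \<eta> \<xi>) = 0" by (simp add: dlift_def)
lemma qpart_dlift[simp]: "fst (snd (dlift \<eta> \<xi>)) = dR (base \<eta>) (base \<xi>)" by (simp add: dlift_def)
lemma base_dlift[simp]: "base (dlift \<eta> \<xi>) = vert (dR (base \<eta>) (base \<xi>))" by (simp add: dlift_def)
lemma fib_dlift[simp]: "fib (dlift \<eta> \<xi>) \<bullet> a = fib \<xi> \<bullet> dR (base \<eta>) (vert a) + fib \<eta> \<bullet> dR (base \<xi>) (vert a)
      - fib \<eta> \<bullet> dR (vert a) (base \<xi>) + p \<bullet> ddR (base \<eta>) (base \<xi>) (vert a) - p \<bullet> ddR (base \<eta>) (vert a) (base \<xi>)"
  unfolding dlift_def fib_Pair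
  by (rule sum_Basis_scaleR_inner) (simp_all add: lin_simps inner_add_right inner_diff_right algebra_simps)
lemma inner_fib_dlift[simp]: "a \<bullet> fib (dlift \<eta> \<xi>) = fib \<xi> \<bullet> dR (base \<eta>) (vert a) + fib \<eta> \<bullet> dR (base \<xi>) (vert a)
      - fib \<eta> \<bullet> dR (vert a) (base \<xi>) + p \<bullet> ddR (base \<eta>) (base \<xi>) (vert a) - p \<bullet> ddR (base \<eta>) (vert a) (base \<xi>)"
  using fib_dlift by (simp add: inner_commute)

abbreviation NR where "NR \<equiv> nijenhuis_coords R dR"
abbreviation dNR where "dNR \<equiv> dnijenhuis_coords R dR ddR"

definition lift_nijenhuis :: "real \<times> 'q \<times> 'q \<Rightarrow> real \<times> 'q \<times> 'q \<Rightarrow> real \<times> 'q \<times> 'q" where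
  "lift_nijenhuis \<xi>1 \<xi>2 = dlift (lift \<xi>1) \<xi>2 - dlift (lift \<xi>2) \<xi>1 + lift (dlift \<xi>2 \<xi>1) - lift (dlift \<xi>1 \<xi>2)"

lemma lift_nijenhuis_fst: "fst (lift_nijenhuis \<xi>1 \<xi>2) = 0" by (simp add: lift_nijenhuis_def)

lemma lift_nijenhuis_base: "base (lift_nijenhuis \<xi>1 \<xi>2) = vert (NR (base \<xi>1) (base \<xi>2))"
  by (simp add: lift_nijenhuis_def nijenhuis_coords_def lin_simps)

lemma lift_nijenhuis_fib: "fib (lift_nijenhuis \<xi>1 \<xi>2) \<bullet> k =
   - (p \<bullet> dNR (vert k) (base \<xi>1) (base \<xi>2) + p \<bullet> dNR (base \<xi>1) (base \<xi>2) (vert k) + p \<bullet> dNR (base \<xi>2) (vert k) (base \<xi>1))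
   + fib \<xi>2 \<bullet> NR (base \<xi>1) (vert k) - fib \<xi>1 \<bullet> NR (base \<xi>2) (vert k)"
  by (simp add: lift_nijenhuis_def nijenhuis_coords_def dnijenhuis_coords_def lin_simps inner_add_right inner_diff_right inner_add_left inner_diff_left ddR_commute)

lemma lift_nijenhuis_eq_0:
  assumes "\<And>B C. NR B C = 0" "\<And>A B C. dNR A B C = 0"
  shows "lift_nijenhuis \<xi>1 \<xi>2 = 0"
proof (rule J_eqI)
  show "fst (lift_nijenhuis \<xi>1 \<xi>2) = fst 0" by (simp add: lift_nijenhuis_fst)
  have "base (lift_nijenhuis \<xi>1 \<xi>2) = 0" using assms(1) by (simp add: lift_nijenhuis_base)
  then show "fst (snd (lift_nijenhuis \<xi>1 \<xi>2)) = fst (snd 0)" by (simp add: base_def zero_prod_def)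
  show "fib (lift_nijenhuis \<xi>1 \<xi>2) \<bullet> k = fib 0 \<bullet> k" for k using assms by (simp add: lift_nijenhuis_fib)
qed

lemma linear_lift: "linear lift"
  by (rule linearI; rule J_eqI) (simp_all add: lin_simps inner_add_left algebra_simps)
lemma linear_dlift: "linear (dlift \<eta>)"
  by (rule linearI; rule J_eqI) (simp_all add: lin_simps inner_add_left algebra_simps)
lemma linear_dlift_left: "linear (\<lambda>\<eta>. dlift \<eta> \<xi>)"
  by (rule linearI; rule J_eqI) (simp_all add: lin_simps inner_add_left algebra_simps)

definition lift_concomitant :: "real \<times> 'q \<times> 'q \<Rightarrow> real \<times> 'q \<times> 'q \<Rightarrow> real \<times> 'q \<times> 'q" where
  "lift_concomitant s \<xi> = dlift (canonical_P 0 s) \<xi> - canonical_P 0 (\<Sum>b\<in>Basis. (s \<bullet> dlift \<xi> b) *\<^sub>R b)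
      + canonical_P 0 (\<Sum>b\<in>Basis. (s \<bullet> dlift b \<xi>) *\<^sub>R b)"

text \<open>The second-derivative terms cancel by \<open>ddR_commute\<close>.\<close>
lemma lift_concomitant_eq_0: "lift_concomitant s \<xi> = 0"
proof -
  define y1 where "y1 = (\<Sum>b\<in>Basis. (s \<bullet> dlift \<xi> b) *\<^sub>R b)"
  define y2 where "y2 = (\<Sum>b\<in>Basis. (s \<bullet> dlift b \<xi>) *\<^sub>R b)"
  have a1: "y1 \<bullet> v = s \<bullet> dlift \<xi> v" for v unfolding y1_def by (rule adjoint_sum_Basis_inner[OF linear_dlift])
  have a2: "y2 \<bullet> v = s \<bullet> dlift v \<xi>" for v unfolding y2_def by (rule adjoint_sum_Basis_inner[OF linear_dlift_left])
  have f1: "fib y1 \<bullet> k = s \<bullet> dlift \<xi> (0, 0, k)" for k using a1 fib_inner by metis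
  have q1: "fst (snd y1) \<bullet> k = s \<bullet> dlift \<xi> (0, k, 0)" for k using a1 qpart_inner by metis
  have f2: "fib y2 \<bullet> k = s \<bullet> dlift (0, 0, k) \<xi>" for k using a2 fib_inner by metis
  have q2: "fst (snd y2) \<bullet> k = s \<bullet> dlift (0, k, 0) \<xi>" for k using a2 qpart_inner by metis
  show ?thesis
  proof (rule J_eqI)
    show "fst (lift_concomitant s \<xi>) = fst (0::real \<times> 'q \<times> 'q)" by (simp add: lift_concomitant_def)
    show "fst (snd (lift_concomitant s \<xi>)) = fst (snd (0::real \<times> 'q \<times> 'q))"
    proof (rule euclidean_eqI)
      fix k :: 'q assume "k \<in> Basis"
      have "fst (snd (lift_concomitant s \<xi>)) \<bullet> k = dR (vert (- fib s)) (base \<xi>) \<bullet> k + fib y1 \<bullet> k - fib y2 \<bullet> k"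
        unfolding lift_concomitant_def y1_def[symmetric] y2_def[symmetric]
        by (simp add: inner_add_left inner_diff_left)
      also have "\<dots> = 0" unfolding f1 f2
        by (simp add: inner_split lin_simps inner_add_right inner_diff_right inner_add_left inner_diff_left ddR_commute inner_commute)
      finally show "fst (snd (lift_concomitant s \<xi>)) \<bullet> k = fst (snd (0::real \<times> 'q \<times> 'q)) \<bullet> k" by simp
    qed
    fix k :: 'q
    have "fib (lift_concomitant s \<xi>) \<bullet> k = fib (dlift (canonical_P 0 s) \<xi>) \<bullet> k - fst (snd y1) \<bullet> k + fst (snd y2) \<bullet> k"
      unfolding lift_concomitant_def y1_def[symmetric] y2_def[symmetric]
      by (simp add: canonical_P_def inner_add_left inner_diff_left)
    also have "\<dots> = 0" unfolding q1 q2
      by (simp add: inner_split lin_simps inner_add_right inner_diff_right inner_add_left inner_diff_left ddR_commute inner_commute)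
    finally show "fib (lift_concomitant s \<xi>) \<bullet> k = fib 0 \<bullet> k" by simp
  qed
qed

lemma canonical_P_adjoint_lift: "canonical_P z (\<Sum>b\<in>Basis. (\<alpha> \<bullet> lift b) *\<^sub>R b) = lift (canonical_P z \<alpha>)"
proof -
  define y where "y = (\<Sum>b\<in>Basis. (\<alpha> \<bullet> lift b) *\<^sub>R b)"
  have a: "y \<bullet> v = \<alpha> \<bullet> lift v" for v unfolding y_def by (rule adjoint_sum_Basis_inner[OF linear_lift])
  have f: "fib y \<bullet> k = \<alpha> \<bullet> lift (0, 0, k)" for k using a fib_inner by metis
  have q: "fst (snd y) \<bullet> k = \<alpha> \<bullet> lift (0, k, 0)" for k using a qpart_inner by metis
  show ?thesis unfolding y_def[symmetric]
  proof (rule J_eqI)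
    show "fst (canonical_P z y) = fst (lift (canonical_P z \<alpha>))" by simp
    show "fst (snd (canonical_P z y)) = fst (snd (lift (canonical_P z \<alpha>)))"
    proof (rule euclidean_eqI)
      fix k :: 'q assume "k \<in> Basis"
      have "fst (snd (canonical_P z y)) \<bullet> k = - (fib y \<bullet> k)" by simp
      also have "\<dots> = fst (snd (lift (canonical_P z \<alpha>))) \<bullet> k" unfolding f
        by (simp add: inner_split lin_simps inner_add_right inner_diff_right inner_add_left inner_diff_left inner_commute)
      finally show "fst (snd (canonical_P z y)) \<bullet> k = fst (snd (lift (canonical_P z \<alpha>))) \<bullet> k" .
    qed
    fix k :: 'q
    have "fib (canonical_P z y) \<bullet> k = fst (snd y) \<bullet> k" by simp
    also have "\<dots> = fib (lift (canonical_P z \<alpha>)) \<bullet> k" unfolding q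
      by (simp add: inner_split lin_simps inner_add_right inner_diff_right inner_add_left inner_diff_left inner_commute)
    finally show "fib (canonical_P z y) \<bullet> k = fib (lift (canonical_P z \<alpha>)) \<bullet> k" .
  qed
qed

end

section \<open>The complete lift in coordinates\<close>

definition coord_map :: "('q::euclidean_space \<Rightarrow> 'q \<Rightarrow> real) \<Rightarrow> ('q \<Rightarrow> real) \<Rightarrow> real \<times> 'q \<Rightarrow> 'q" where
  "coord_map c d w = (\<Sum>i\<in>Basis. ((\<Sum>j\<in>Basis. c i j * (snd w \<bullet> j)) + d i * fst w) *\<^sub>R i)"

lemma coord_map_add: "coord_map c d (a + b) = coord_map c d a + coord_map c d b"
  unfolding coord_map_def by (simp add: inner_add_left distrib_left sum.distrib scaleR_add_left)

lemma coord_map_scale: "coord_map c d (r *\<^sub>R a) = r *\<^sub>R coord_map c d a"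
  unfolding coord_map_def by (simp add: scaleR_sum_right sum_distrib_left algebra_simps)

lemma linear_coord_map: "linear (coord_map c d)"
  by (rule linearI) (simp_all add: coord_map_add coord_map_scale)

lemma linear_coord_map_coeffs:
  assumes c: "\<And>i j. i \<in> Basis \<Longrightarrow> j \<in> Basis \<Longrightarrow> linear (\<lambda>h. c h i j)"
    and d: "\<And>i. i \<in> Basis \<Longrightarrow> linear (\<lambda>h. d h i)"
  shows "linear (\<lambda>h. coord_map (c h) (d h) w)"
proof (rule linearI)
  fix a b and r :: real
  show "coord_map (c (a + b)) (d (a + b)) w = coord_map (c a) (d a) w + coord_map (c b) (d b) w"
    unfolding coord_map_def using linear_add[OF c] linear_add[OF d]
    by (simp add: distrib_right sum.distrib scaleR_add_left algebra_simps)
  show "coord_map (c (r *\<^sub>R a)) (d (r *\<^sub>R a)) w = r *\<^sub>R coord_map (c a) (d a) w"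
    unfolding coord_map_def using linear_cmul[OF c] linear_cmul[OF d]
    by (simp add: scaleR_sum_right sum_distrib_left algebra_simps)
qed

definition R_at :: "(real \<times> 'q::euclidean_space \<Rightarrow> 'q \<Rightarrow> 'q \<Rightarrow> real) \<Rightarrow> (real \<times> 'q \<Rightarrow> 'q \<Rightarrow> real) \<Rightarrow> real \<times> 'q \<Rightarrow> real \<times> 'q \<Rightarrow> 'q" where
  "R_at Rc R0 e = coord_map (\<lambda>i j. Rc e i j) (\<lambda>i. R0 e i)"
definition dR_at :: "(real \<times> 'q::euclidean_space \<Rightarrow> 'q \<Rightarrow> 'q \<Rightarrow> real) \<Rightarrow> (real \<times> 'q \<Rightarrow> 'q \<Rightarrow> real) \<Rightarrow> real \<times> 'q \<Rightarrow> real \<times> 'q \<Rightarrow> real \<times> 'q \<Rightarrow> 'q" where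
  "dR_at Rc R0 e h = coord_map (\<lambda>i j. D (\<lambda>e. Rc e i j) e h) (\<lambda>i. D (\<lambda>e. R0 e i) e h)"
definition ddR_at :: "(real \<times> 'q::euclidean_space \<Rightarrow> 'q \<Rightarrow> 'q \<Rightarrow> real) \<Rightarrow> (real \<times> 'q \<Rightarrow> 'q \<Rightarrow> real) \<Rightarrow> real \<times> 'q \<Rightarrow> real \<times> 'q \<Rightarrow> real \<times> 'q \<Rightarrow> real \<times> 'q \<Rightarrow> 'q" where
  "ddR_at Rc R0 e h1 h2 = coord_map (\<lambda>i j. hessian (\<lambda>e. Rc e i j) e h1 h2) (\<lambda>i. hessian (\<lambda>e. R0 e i) e h1 h2)"

lemma coord_map_vert:
  fixes k :: "'q::euclidean_space"
  assumes "k \<in> Basis"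
  shows "coord_map c d (vert k) = (\<Sum>i\<in>Basis. c i k *\<^sub>R i)"
proof -
  have "(\<Sum>j\<in>Basis. c i j * (k \<bullet> j)) = c i k" for i
    using assms by (simp add: inner_Basis if_distrib[of "\<lambda>x. c _ _ * x"] sum.delta cong: if_cong)
  thus ?thesis unfolding coord_map_def vert_def by simp
qed

lemma D_eq_partials:
  fixes g :: "real \<times> 'q::euclidean_space \<Rightarrow> real"
  assumes "g differentiable (at e)"
  shows "D g e w = fst w * dt_E g e + (\<Sum>k\<in>Basis. (snd w \<bullet> k) * dq_E k g e)"
proof -
  have l: "linear (D g e)" using linear_D[OF assms] .
  have l2: "linear (\<lambda>x. D g e (0, x))"
  proof (rule linearI)
    fix a b :: 'q show "D g e (0, a + b) = D g e (0, a) + D g e (0, b)"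
      using linear_add[OF l, of "(0, a)" "(0, b)"] by simp
  next
    fix c :: real and x :: 'q show "D g e (0, c *\<^sub>R x) = c *\<^sub>R D g e (0, x)"
      using linear_cmul[OF l, of c "(0, x)"] by simp
  qed
  have w_eq: "fst w *\<^sub>R (1, 0) + (0, snd w) = w" by (simp add: prod_eq_iff)
  have c1: "D g e (fst w *\<^sub>R (1, 0)) = fst w * D g e (1, 0)"
    using linear_cmul[OF l, of "fst w" "(1, 0)"] by simp
  have "D g e w = D g e (fst w *\<^sub>R (1, 0)) + D g e (0, snd w)"
    using linear_add[OF l, of "fst w *\<^sub>R (1, 0)" "(0, snd w)"] unfolding w_eq .
  hence "D g e w = fst w * D g e (1, 0) + D g e (0, snd w)" unfolding c1 .
  also have "D g e (0, snd w) = (\<Sum>k\<in>Basis. (snd w \<bullet> k) * D g e (0, k))"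
    using linear_eq_sum_Basis[OF l2, of "snd w"] by simp
  finally show ?thesis unfolding dt_E_def dq_E_def .
qed

locale coord_tensor =
  fixes U :: "(real \<times> 'q::euclidean_space) set"
    and Rc :: "real \<times> 'q \<Rightarrow> 'q \<Rightarrow> 'q \<Rightarrow> real"
    and R0 :: "real \<times> 'q \<Rightarrow> 'q \<Rightarrow> real"
  assumes U: "open U"
    and Rc: "\<And>i j. i \<in> Basis \<Longrightarrow> j \<in> Basis \<Longrightarrow> twice_differentiable_on U (\<lambda>e. Rc e i j)"
    and R0: "\<And>i. i \<in> Basis \<Longrightarrow> twice_differentiable_on U (\<lambda>e. R0 e i)"
begin

lemma lift_at_coords:
  assumes e: "e \<in> U"
  shows "lift_at (R_at Rc R0 e) (dR_at Rc R0 e) (ddR_at Rc R0 e)"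
proof (rule lift_at.intro)
  have D: "twice_differentiable_on U g \<Longrightarrow> linear (D g e)" for g
    using e by (simp add: twice_differentiable_onD linear_D)
  show "linear (R_at Rc R0 e)" unfolding R_at_def by (rule linear_coord_map)
  show "linear (dR_at Rc R0 e h)" for h unfolding dR_at_def by (rule linear_coord_map)
  show "linear (ddR_at Rc R0 e h v)" for h v unfolding ddR_at_def by (rule linear_coord_map)
  show "linear (\<lambda>h. dR_at Rc R0 e h w)" for w
    unfolding dR_at_def by (intro linear_coord_map_coeffs D) (simp_all add: Rc R0)
  show "linear (\<lambda>h. ddR_at Rc R0 e h v w)" for v w
    unfolding ddR_at_def by (intro linear_coord_map_coeffs linear_hessian_left[where U=U]) (simp_all add: e Rc R0)
  show "linear (\<lambda>v. ddR_at Rc R0 e h v w)" for h w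
    unfolding ddR_at_def by (intro linear_coord_map_coeffs linear_hessian[where U=U]) (simp_all add: U e Rc R0)
  show "ddR_at Rc R0 e h v w = ddR_at Rc R0 e v h w" for h v w
    unfolding ddR_at_def coord_map_def using U e Rc R0 by (simp add: hessian_commute[of U e])
qed
lemma has_derivative_R_at:
  assumes e: "e \<in> U"
  shows "((\<lambda>e'. R_at Rc R0 e' w) has_derivative (\<lambda>h. dR_at Rc R0 e h w)) (at e)"
  unfolding R_at_def dR_at_def coord_map_def
  using Rc R0 e
  by (auto intro!: derivative_eq_intros has_derivative_D twice_differentiable_onD)

lemma has_derivative_dR_at:
  assumes e: "e \<in> U"
  shows "((\<lambda>e'. dR_at Rc R0 e' h w) has_derivative (\<lambda>h1. ddR_at Rc R0 e h1 h w)) (at e)"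
  unfolding dR_at_def ddR_at_def coord_map_def hessian_def
  using Rc R0 e
  by (auto intro!: derivative_eq_intros has_derivative_D twice_differentiable_onD)

lemma complete_lift_eq_lift:
  assumes z: "base z \<in> U"
  shows "complete_lift Rc R0 z \<xi> = lift_at.lift (R_at Rc R0 (base z)) (dR_at Rc R0 (base z)) (fib z) \<xi>"
proof -
  interpret L: lift_at "R_at Rc R0 (base z)" "dR_at Rc R0 (base z)" "ddR_at Rc R0 (base z)" "fib z"
    by (rule lift_at_coords[OF z])
  obtain t q p where zz: "z = (t, q, p)" by (cases z) auto
  obtain w0 wq wp where xx: "\<xi> = (w0, wq, wp)" by (cases \<xi>) auto
  define e where "e = (t, q)"
  have be: "base z = e" unfolding zz e_def by (simp add: base_def)
  have eU: "e \<in> U" using z be by simp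
  have dR: "(\<lambda>e. Rc e i j) differentiable (at e)" if "i \<in> Basis" "j \<in> Basis" for i j
    using Rc[OF that] eU by (rule twice_differentiable_onD)
  show ?thesis
  proof (rule J_eqI)
    show "fst (complete_lift Rc R0 z \<xi>) = fst (L.lift \<xi>)" by (simp add: complete_lift_def Let_def)
    show "fst (snd (complete_lift Rc R0 z \<xi>)) = fst (snd (L.lift \<xi>))"
      unfolding L.qpart_lift by (simp add: complete_lift_def Let_def R_at_def coord_map_def base_def)
    fix k :: 'q assume k: "k \<in> Basis"
    have lhs: "fib (complete_lift Rc R0 z \<xi>) \<bullet> k =
       (\<Sum>i\<in>Basis. Rc e i k * (wp \<bullet> i))
       + (\<Sum>i\<in>Basis. \<Sum>k'\<in>Basis. (p \<bullet> i) * (dq_E k' (\<lambda>e'. Rc e' i k) e - dq_E k (\<lambda>e'. Rc e' i k') e) * (wq \<bullet> k'))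
       + (\<Sum>i\<in>Basis. (p \<bullet> i) * (dt_E (\<lambda>e'. Rc e' i k) e - dq_E k (\<lambda>e'. R0 e' i) e) * w0)"
      unfolding zz xx e_def complete_lift_def Let_def fib_Pair
      apply (simp only: fst_conv snd_conv)
      by (rule inner_sum_left_Basis[OF k])
    have r0: "R_at Rc R0 e (vert k) = (\<Sum>i\<in>Basis. Rc e i k *\<^sub>R i)"
      unfolding R_at_def by (rule coord_map_vert[OF k])
    have r1a: "dR_at Rc R0 e (w0, wq) (vert k) = (\<Sum>i\<in>Basis. (w0 * dt_E (\<lambda>e'. Rc e' i k) e
        + (\<Sum>k'\<in>Basis. (wq \<bullet> k') * dq_E k' (\<lambda>e'. Rc e' i k) e)) *\<^sub>R i)"
      unfolding dR_at_def coord_map_vert[OF k] using D_eq_partials[OF dR[OF _ k]] by simp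
    have r1b: "dR_at Rc R0 e (vert k) (w0, wq) = (\<Sum>i\<in>Basis. ((\<Sum>j\<in>Basis. dq_E k (\<lambda>e'. Rc e' i j) e * (wq \<bullet> j))
        + dq_E k (\<lambda>e'. R0 e' i) e * w0) *\<^sub>R i)"
      unfolding dR_at_def coord_map_def dq_E_def vert_def by simp
    have "fib (L.lift \<xi>) \<bullet> k = fib \<xi> \<bullet> R_at Rc R0 e (vert k) + fib z \<bullet> dR_at Rc R0 e (base \<xi>) (vert k) - fib z \<bullet> dR_at Rc R0 e (vert k) (base \<xi>)"
      using L.fib_lift[of \<xi> k] unfolding be .
    also have "\<dots> = wp \<bullet> R_at Rc R0 e (vert k) + p \<bullet> dR_at Rc R0 e (w0, wq) (vert k) - p \<bullet> dR_at Rc R0 e (vert k) (w0, wq)"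
      by (simp add: xx zz base_Pair)
    also have "\<dots> = fib (complete_lift Rc R0 z \<xi>) \<bullet> k"
      unfolding lhs r0 r1a r1b
      by (simp add: inner_sum_right inner_commute sum_distrib_left sum_subtractf sum.distrib algebra_simps)
    finally show "fib (complete_lift Rc R0 z \<xi>) \<bullet> k = fib (L.lift \<xi>) \<bullet> k" by simp
  qed
qed

lemma has_derivative_base: "(base has_derivative base) (at z)"
  unfolding base_def[abs_def] by (auto intro!: derivative_eq_intros)

lemma has_derivative_fib: "(fib has_derivative fib) (at z)"
  unfolding fib_def[abs_def] by (auto intro!: derivative_eq_intros)

lemma open_J1_over: "open (J1_over U)"
proof -
  have "continuous_on UNIV base"
    using has_derivative_base has_derivative_continuous continuous_at_imp_continuous_on by blast
  moreover have "J1_over U = base -` U" by auto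
  ultimately show ?thesis using U open_vimage[of U base] by simp
qed

lemma has_derivative_complete_lift:
  assumes z: "base z \<in> U"
  shows "((\<lambda>z'. complete_lift Rc R0 z' \<xi>) has_derivative
          (\<lambda>\<eta>. lift_at.dlift (dR_at Rc R0 (base z)) (ddR_at Rc R0 (base z)) (fib z) \<eta> \<xi>)) (at z)"
proof -
  define e where "e = base z"
  have rrb: "((\<lambda>z'. R_at Rc R0 (base z') w) has_derivative (\<lambda>\<eta>. dR_at Rc R0 e (base \<eta>) w)) (at z)" for w
    using diff_chain_at[OF has_derivative_base has_derivative_R_at[OF z, of w]] unfolding e_def by (simp add: o_def)
  have r1b: "((\<lambda>z'. dR_at Rc R0 (base z') h w) has_derivative (\<lambda>\<eta>. ddR_at Rc R0 e (base \<eta>) h w)) (at z)" for h w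
    using diff_chain_at[OF has_derivative_base has_derivative_dR_at[OF z, of h w]] unfolding e_def by (simp add: o_def)
  define E where "E = (\<lambda>z'. ((0::real), R_at Rc R0 (base z') (base \<xi>),
     \<Sum>k\<in>Basis. (fib \<xi> \<bullet> R_at Rc R0 (base z') (vert k) + fib z' \<bullet> dR_at Rc R0 (base z') (base \<xi>) (vert k)
        - fib z' \<bullet> dR_at Rc R0 (base z') (vert k) (base \<xi>)) *\<^sub>R k))"
  have Eeq: "complete_lift Rc R0 z' \<xi> = E z'" if "z' \<in> J1_over U" for z'
    using complete_lift_eq_lift[of z' \<xi>] lift_at.lift_def[OF lift_at_coords, of "base z'" "fib z'" \<xi>] that unfolding E_def by simp
  have dE: "lift_at.dlift (dR_at Rc R0 e) (ddR_at Rc R0 e) (fib z) \<eta> \<xi> = ((0::real), dR_at Rc R0 e (base \<eta>) (base \<xi>),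
     \<Sum>k\<in>Basis. (fib \<xi> \<bullet> dR_at Rc R0 e (base \<eta>) (vert k) + fib \<eta> \<bullet> dR_at Rc R0 e (base \<xi>) (vert k)
      - fib \<eta> \<bullet> dR_at Rc R0 e (vert k) (base \<xi>) + fib z \<bullet> ddR_at Rc R0 e (base \<eta>) (base \<xi>) (vert k)
      - fib z \<bullet> ddR_at Rc R0 e (base \<eta>) (vert k) (base \<xi>)) *\<^sub>R k)" for \<eta>
    using lift_at.dlift_def[OF lift_at_coords[OF z[folded e_def]]] by simp
  have E: "(E has_derivative (\<lambda>\<eta>. lift_at.dlift (dR_at Rc R0 e) (ddR_at Rc R0 e) (fib z) \<eta> \<xi>)) (at z)"
    unfolding dE E_def
    by (rule has_derivative_eq_rhs,
        (rule has_derivative_Pair has_derivative_const has_derivative_sum has_derivative_scaleR_left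
          has_derivative_add has_derivative_diff has_derivative_inner rrb r1b has_derivative_fib | assumption)+)
      (simp add: fun_eq_iff algebra_simps e_def)
  show ?thesis
    by (rule has_derivative_transform_within_open[OF E[unfolded e_def] open_J1_over])
       (use z Eeq in auto)
qed

lemma tensor_deriv_complete_lift:
  assumes z: "base z \<in> U"
  shows "tensor_deriv (complete_lift Rc R0) z \<eta> \<xi> = lift_at.dlift (dR_at Rc R0 (base z)) (ddR_at Rc R0 (base z)) (fib z) \<eta> \<xi>"
  unfolding tensor_deriv_def using D_eqI[OF has_derivative_complete_lift[OF z]] by simp

lemma tensorE_eq_vert: "tensorE Rc R0 e w = vert (R_at Rc R0 e w)"
  by (simp add: tensorE_def R_at_def coord_map_def vert_def)

lemma has_derivative_tensorE:
  assumes e: "e \<in> U"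
  shows "((\<lambda>e'. tensorE Rc R0 e' w) has_derivative (\<lambda>h. vert (dR_at Rc R0 e h w))) (at e)"
  unfolding tensorE_eq_vert vert_def
  by (auto intro!: derivative_eq_intros has_derivative_R_at[OF e])

lemma tensor_deriv_tensorE:
  assumes e: "e \<in> U"
  shows "tensor_deriv (tensorE Rc R0) e h w = vert (dR_at Rc R0 e h w)"
  unfolding tensor_deriv_def using D_eqI[OF has_derivative_tensorE[OF e]] by simp

lemma has_derivative_vert:
  assumes "(g has_derivative g') (at x)"
  shows "((\<lambda>x. vert (g x)) has_derivative (\<lambda>h. vert (g' h))) (at x)"
  unfolding vert_def by (rule has_derivative_Pair[OF has_derivative_const assms])

lemma has_derivative_nijenhuis_coords:
  assumes e: "e \<in> U"
  shows "((\<lambda>e'. nijenhuis_coords (R_at Rc R0 e') (dR_at Rc R0 e') B C) has_derivative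
          (\<lambda>A. dnijenhuis_coords (R_at Rc R0 e) (dR_at Rc R0 e) (ddR_at Rc R0 e) A B C)) (at e)"
proof -
  note L = lift_at_coords[OF e]
  have t1: "((\<lambda>e'. dR_at Rc R0 e' (vert (R_at Rc R0 e' X)) W) has_derivative
            (\<lambda>A. dR_at Rc R0 e (vert (dR_at Rc R0 e A X)) W + ddR_at Rc R0 e A (vert (R_at Rc R0 e X)) W)) (at e)" for X W
  proof -
    have "((\<lambda>e'. dR_at Rc R0 e' (vert (R_at Rc R0 e' X)) W) has_derivative
            (\<lambda>A. dR_at Rc R0 e (vert (dR_at Rc R0 e A X)) W
               + (\<Sum>b\<in>Basis. (vert (R_at Rc R0 e X) \<bullet> b) *\<^sub>R ddR_at Rc R0 e A b W))) (at e)"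
      using has_derivative_dR_at[OF e] lift_at.linear_dR_left[OF lift_at_coords]
      by (intro has_derivative_tensor_apply[OF U e, where S'="\<lambda>b A. ddR_at Rc R0 e A b W"])
        (auto intro: has_derivative_vert has_derivative_R_at[OF e])
    then show ?thesis by (simp only: linear_eq_sum_Basis[OF lift_at.linear_ddR_mid[OF L], symmetric])
  qed
  have t2: "((\<lambda>e'. R_at Rc R0 e' (vert (dR_at Rc R0 e' X Y))) has_derivative
            (\<lambda>A. R_at Rc R0 e (vert (ddR_at Rc R0 e A X Y)) + dR_at Rc R0 e A (vert (dR_at Rc R0 e X Y)))) (at e)" for X Y
  proof -
    have "((\<lambda>e'. R_at Rc R0 e' (vert (dR_at Rc R0 e' X Y))) has_derivative
            (\<lambda>A. R_at Rc R0 e (vert (ddR_at Rc R0 e A X Y))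
               + (\<Sum>b\<in>Basis. (vert (dR_at Rc R0 e X Y) \<bullet> b) *\<^sub>R dR_at Rc R0 e A b))) (at e)"
      using has_derivative_R_at[OF e] lift_at.linear_R[OF lift_at_coords]
      by (intro has_derivative_tensor_apply[OF U e, where S'="\<lambda>b A. dR_at Rc R0 e A b"])
        (auto intro: has_derivative_vert has_derivative_dR_at[OF e])
    then show ?thesis by (simp only: linear_eq_sum_Basis[OF lift_at.linear_dR[OF L], symmetric])
  qed
  show ?thesis
    unfolding nijenhuis_coords_def dnijenhuis_coords_def
    by (rule has_derivative_eq_rhs, (rule has_derivative_add has_derivative_diff t1 t2)+)
      (simp add: fun_eq_iff algebra_simps)
qed


lemma linear_complete_lift:
  assumes z: "base z \<in> U"
  shows "linear (complete_lift Rc R0 z)"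
proof -
  have "complete_lift Rc R0 z = lift_at.lift (R_at Rc R0 (base z)) (dR_at Rc R0 (base z)) (fib z)"
    by (intro ext complete_lift_eq_lift[OF z])
  then show ?thesis using lift_at.linear_lift[OF lift_at_coords[OF z]] by simp
qed

lemma linear_tensorE:
  assumes e: "e \<in> U"
  shows "linear (tensorE Rc R0 e)"
  using linear_add[OF lift_at.linear_R[OF lift_at_coords[OF e]]] linear_cmul[OF lift_at.linear_R[OF lift_at_coords[OF e]]]
  by (intro linearI) (simp_all add: tensorE_eq_vert)

lemma nijenhuis_tensorE:
  assumes e: "e \<in> U" and X: "X differentiable (at e)" and Y: "Y differentiable (at e)"
  shows "nijenhuis (tensorE Rc R0) X Y e = vert (nijenhuis_coords (R_at Rc R0 e) (dR_at Rc R0 e) (X e) (Y e))"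
proof -
  have "\<forall>b\<in>Basis. (\<lambda>y. tensorE Rc R0 y b) differentiable (at e)"
    using has_derivative_tensorE[OF e] unfolding differentiable_def by blast
  moreover have "\<forall>y\<in>U. linear (tensorE Rc R0 y)" by (simp add: linear_tensorE)
  ultimately have "nijenhuis (tensorE Rc R0) X Y e = nijenhuis_at (tensorE Rc R0) e (X e) (Y e)"
    by (intro nijenhuis_eq_nijenhuis_at[OF U e _ _ X Y])
  then show ?thesis
    by (simp add: nijenhuis_at_def tensor_deriv_tensorE[OF e] tensorE_eq_vert nijenhuis_coords_def)
qed

lemma nijenhuis_complete_lift:
  assumes z: "base z \<in> U" and X: "X differentiable (at z)" and Y: "Y differentiable (at z)"
  shows "nijenhuis (complete_lift Rc R0) X Y z =
     lift_at.lift_nijenhuis (R_at Rc R0 (base z)) (dR_at Rc R0 (base z)) (ddR_at Rc R0 (base z)) (fib z) (X z) (Y z)"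
proof -
  have "\<forall>b\<in>Basis. (\<lambda>y. complete_lift Rc R0 y b) differentiable (at z)"
    using has_derivative_complete_lift[OF z] unfolding differentiable_def by blast
  moreover have "\<forall>y\<in>J1_over U. linear (complete_lift Rc R0 y)" by (simp add: linear_complete_lift)
  ultimately have "nijenhuis (complete_lift Rc R0) X Y z = nijenhuis_at (complete_lift Rc R0) z (X z) (Y z)"
    using z by (intro nijenhuis_eq_nijenhuis_at[OF open_J1_over _ _ _ X Y]) simp_all
  then show ?thesis
    unfolding nijenhuis_at_def tensor_deriv_complete_lift[OF z] complete_lift_eq_lift[OF z]
      lift_at.lift_nijenhuis_def[OF lift_at_coords[OF z]] .
qed

lemma nijenhuis_zero_tensorE_iff:
  "nijenhuis_zero U (tensorE Rc R0) \<longleftrightarrow>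
     (\<forall>e\<in>U. \<forall>B C. nijenhuis_coords (R_at Rc R0 e) (dR_at Rc R0 e) B C = 0)"
proof
  assume N: "nijenhuis_zero U (tensorE Rc R0)"
  show "\<forall>e\<in>U. \<forall>B C. nijenhuis_coords (R_at Rc R0 e) (dR_at Rc R0 e) B C = 0"
  proof (intro ballI allI)
    fix e B C assume e: "e \<in> U"
    have "nijenhuis (tensorE Rc R0) (\<lambda>_. B) (\<lambda>_. C) e = 0"
      using N e smooth_on_const unfolding nijenhuis_zero_def by blast
    then show "nijenhuis_coords (R_at Rc R0 e) (dR_at Rc R0 e) B C = 0"
      using nijenhuis_tensorE[OF e, of "\<lambda>_. B" "\<lambda>_. C"] by (simp add: vert_eq_0_iff)
  qed
next
  assume N: "\<forall>e\<in>U. \<forall>B C. nijenhuis_coords (R_at Rc R0 e) (dR_at Rc R0 e) B C = 0"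
  show "nijenhuis_zero U (tensorE Rc R0)"
    unfolding nijenhuis_zero_def
  proof (intro allI impI ballI)
    fix X Y :: "real \<times> 'q \<Rightarrow> real \<times> 'q" and e assume "smooth_on U X \<and> smooth_on U Y" and e: "e \<in> U"
    then have "X differentiable (at e)" "Y differentiable (at e)"
      by (auto intro: smooth_on_imp_differentiable)
    moreover have "nijenhuis_coords (R_at Rc R0 e) (dR_at Rc R0 e) (X e) (Y e) = 0" using N e by blast
    ultimately show "nijenhuis (tensorE Rc R0) X Y e = 0" by (simp add: nijenhuis_tensorE[OF e])
  qed
qed

lemma dnijenhuis_coords_eq_0:
  assumes N: "\<forall>e\<in>U. \<forall>B C. nijenhuis_coords (R_at Rc R0 e) (dR_at Rc R0 e) B C = 0" and e: "e \<in> U"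
  shows "dnijenhuis_coords (R_at Rc R0 e) (dR_at Rc R0 e) (ddR_at Rc R0 e) A B C = 0"
proof -
  have "(\<lambda>A. dnijenhuis_coords (R_at Rc R0 e) (dR_at Rc R0 e) (ddR_at Rc R0 e) A B C)
      = D (\<lambda>e'. nijenhuis_coords (R_at Rc R0 e') (dR_at Rc R0 e') B C) e"
    by (rule D_eqI[symmetric]) (rule has_derivative_nijenhuis_coords[OF e])
  also have "\<dots> = D (\<lambda>e'. 0) e"
    by (intro D_cong_open[OF U e]) (use N in blast)
  also have "\<dots> = (\<lambda>A. 0)" by (intro D_eqI has_derivative_const)
  finally show ?thesis by (rule fun_cong)
qed

text \<open>The base component of the torsion of the lift is the torsion of \<open>R\<close>; its fibre component
  is built from the torsion of \<open>R\<close> and the derivative of that torsion.\<close>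
lemma nijenhuis_zero_complete_lift_iff:
  "nijenhuis_zero (J1_over U) (complete_lift Rc R0) \<longleftrightarrow> nijenhuis_zero U (tensorE Rc R0)"
  unfolding nijenhuis_zero_tensorE_iff
proof
  assume N: "nijenhuis_zero (J1_over U) (complete_lift Rc R0)"
  show "\<forall>e\<in>U. \<forall>B C. nijenhuis_coords (R_at Rc R0 e) (dR_at Rc R0 e) B C = 0"
  proof (intro ballI allI)
    fix e B C assume e: "e \<in> U"
    define z where "z = (fst e, snd e, 0::'q)"
    have z: "base z = e" by (simp add: z_def base_Pair)
    have "z \<in> J1_over U" using e z by simp
    then have "nijenhuis (complete_lift Rc R0) (\<lambda>_. (fst B, snd B, 0)) (\<lambda>_. (fst C, snd C, 0)) z = 0"
      using N smooth_on_const unfolding nijenhuis_zero_def by blast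
    then have "base (lift_at.lift_nijenhuis (R_at Rc R0 e) (dR_at Rc R0 e) (ddR_at Rc R0 e) (fib z)
        (fst B, snd B, 0) (fst C, snd C, 0)) = 0"
      using nijenhuis_complete_lift[of z] e z by simp
    then show "nijenhuis_coords (R_at Rc R0 e) (dR_at Rc R0 e) B C = 0"
      by (simp add: lift_at.lift_nijenhuis_base[OF lift_at_coords[OF e]] base_Pair vert_eq_0_iff)
  qed
next
  assume N: "\<forall>e\<in>U. \<forall>B C. nijenhuis_coords (R_at Rc R0 e) (dR_at Rc R0 e) B C = 0"
  show "nijenhuis_zero (J1_over U) (complete_lift Rc R0)"
    unfolding nijenhuis_zero_def
  proof (intro allI impI ballI)
    fix X Y :: "real \<times> 'q \<times> 'q \<Rightarrow> real \<times> 'q \<times> 'q" and z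
    assume "smooth_on (J1_over U) X \<and> smooth_on (J1_over U) Y" "z \<in> J1_over U"
    then have z: "base z \<in> U" and dX: "X differentiable (at z)" and dY: "Y differentiable (at z)"
      by (auto intro: smooth_on_imp_differentiable)
    have "nijenhuis_coords (R_at Rc R0 (base z)) (dR_at Rc R0 (base z)) B C = 0" for B C
      using N z by blast
    with lift_at.lift_nijenhuis_eq_0[OF lift_at_coords[OF z]] dnijenhuis_coords_eq_0[OF N z]
    show "nijenhuis (complete_lift Rc R0) X Y z = 0"
      unfolding nijenhuis_complete_lift[OF z dX dY] by blast
  qed
qed

lemma canonical_P_tadj_complete_lift:
  assumes z: "base z \<in> U"
  shows "canonical_P y (tadj (complete_lift Rc R0) z \<alpha>) = complete_lift Rc R0 z (canonical_P y \<alpha>)"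
  using lift_at.canonical_P_adjoint_lift[OF lift_at_coords[OF z]]
  by (simp add: tadj_def complete_lift_eq_lift[OF z])

lemma mm_concomitant_complete_lift:
  assumes z: "base z \<in> U" and \<sigma>: "\<sigma> differentiable (at z)" and Z: "Z differentiable (at z)"
  shows "mm_concomitant canonical_P (complete_lift Rc R0) \<sigma> Z z = 0"
proof -
  have "\<forall>b\<in>Basis. (\<lambda>y. complete_lift Rc R0 y b) differentiable (at z)"
    using has_derivative_complete_lift[OF z] unfolding differentiable_def by blast
  moreover have "\<forall>y\<in>J1_over U. linear (complete_lift Rc R0 y)" by (simp add: linear_complete_lift)
  ultimately have "mm_concomitant (\<lambda>_. canonical_P 0) (complete_lift Rc R0) \<sigma> Z z
      = concomitant_at (complete_lift Rc R0) (canonical_P 0) z (\<sigma> z) (Z z)"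
    using z canonical_P_tadj_complete_lift[OF z]
    by (intro mm_concomitant_const_eq_concomitant_at[OF open_J1_over _ _ _ linear_canonical_P _ \<sigma> Z]) simp_all
  also have "\<dots> = 0"
    using lift_at.lift_concomitant_eq_0[OF lift_at_coords[OF z]]
    unfolding concomitant_at_def tensor_deriv_complete_lift[OF z]
      lift_at.lift_concomitant_def[OF lift_at_coords[OF z]] .
  finally show ?thesis by (subst canonical_P_const)
qed

lemma poisson_nijenhuis_complete_lift_iff:
  "poisson_nijenhuis (J1_over U) canonical_P (complete_lift Rc R0) \<longleftrightarrow> nijenhuis_zero U (tensorE Rc R0)"
proof -
  have "\<forall>z\<in>J1_over U. \<forall>\<alpha>. canonical_P z (tadj (complete_lift Rc R0) z \<alpha>)
      = complete_lift Rc R0 z (canonical_P z \<alpha>)"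
    using canonical_P_tadj_complete_lift by simp
  moreover have "\<forall>\<sigma> Z. smooth_on (J1_over U) \<sigma> \<and> smooth_on (J1_over U) Z \<longrightarrow>
      (\<forall>z\<in>J1_over U. mm_concomitant canonical_P (complete_lift Rc R0) \<sigma> Z z = 0)"
  proof (intro allI impI ballI)
    fix \<sigma> Z :: "real \<times> 'q \<times> 'q \<Rightarrow> real \<times> 'q \<times> 'q" and z
    assume "smooth_on (J1_over U) \<sigma> \<and> smooth_on (J1_over U) Z" "z \<in> J1_over U"
    then show "mm_concomitant canonical_P (complete_lift Rc R0) \<sigma> Z z = 0"
      by (intro mm_concomitant_complete_lift) (auto intro: smooth_on_imp_differentiable)
  qed
  ultimately show ?thesis
    unfolding poisson_nijenhuis_def nijenhuis_zero_complete_lift_iff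
    using is_poisson_canonical_P[OF open_J1_over] by blast
qed

end

theorem theorem3:
  fixes U :: "(real \<times> 'q::euclidean_space) set"
    and Rc :: "real \<times> 'q \<Rightarrow> 'q \<Rightarrow> 'q \<Rightarrow> real"
    and R0 :: "real \<times> 'q \<Rightarrow> 'q \<Rightarrow> real"
  assumes "open U"
    and "\<forall>i\<in>Basis. \<forall>j\<in>Basis. smooth_on U (\<lambda>e. Rc e i j)"
    and "\<forall>i\<in>Basis. smooth_on U (\<lambda>e. R0 e i)"
  shows "poisson_nijenhuis (J1_over U) canonical_P (complete_lift Rc R0)
         \<longleftrightarrow> nijenhuis_zero U (tensorE Rc R0)"
proof -
  interpret coord_tensor U Rc R0
    using assms by unfold_locales (auto intro: smooth_on_imp_twice_differentiable_on)
  show ?thesis by (rule poisson_nijenhuis_complete_lift_iff)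
qed

end
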